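(* Let $(M,g)$ be a 4-dimensional Lorentzian (CQR)$_4$ manifold with fundamental vector $A$. Then at every point where $C_{jklm}\neq0$, $A$ is a null vector and the Weyl tensor is of Petrov type N with respect to $A$, i.e. $C_{jklm}A^m=0$.
   Context: $(M,g)$ is a connected Hausdorff Lorentzian manifold with Levi-Civita connection $\nabla$; indices raised/lowered with $g$, repeated indices summed. $R_{jklm}$ is the Riemann tensor, $R_{kl}=-R_{mkl}{}^m$, $R=R^m{}_m$, and the Weyl tensor (with $n=4$) is $$C_{jklm}=R_{jklm}+\tfrac{1}{n-2}\big(g_{mj}R_{kl}-g_{mk}R_{jl}+R_{mj}g_{kl}-R_{mk}g_{jl}\big)-\tfrac{R}{(n-1)(n-2)}\big(g_{mj}g_{kl}-g_{mk}g_{jl}\big).$$ (CQR)$_n$: $C_{jklm}\not\equiv 0$ and there is a non-zero vector field $A_i$ (fundamental vector) with $$\nabla_i C_{jklm}=2A_iC_{jklm}+A_jC_{iklm}+A_kC_{jilm}+A_lC_{jkim}+A_mC_{jkli}.$$ (Bel–Debever criterion) A non-zero Weyl tensor at a point is of Petrov type N with respect to a non-zero null vector $k$ if $C_{jklm}k^m=0$. *)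

theory Defs
  imports "HOL-Analysis.Analysis"
begin

text \<open>Local-coordinate (chart) setting: points of an open connected set U of R^4,
  tensor components indexed by the 4-element type 4.  Index conventions follow
  the paper: tensors with lower indices are stored as functions of the indices;
  the metric g x is the matrix (g_ij) at x, its inverse is (g^ij).\<close>

definition pd :: "(real^4 \<Rightarrow> real) \<Rightarrow> 4 \<Rightarrow> real^4 \<Rightarrow> real" where
  "pd f i x = frechet_derivative f (at x) (axis i 1)"

fun iter_pd :: "(real^4 \<Rightarrow> real) \<Rightarrow> 4 list \<Rightarrow> real^4 \<Rightarrow> real" where
  "iter_pd f [] = f"
| "iter_pd f (i # is) = pd (iter_pd f is) i"

definition smooth_fun_on :: "(real^4) set \<Rightarrow> (real^4 \<Rightarrow> real) \<Rightarrow> bool" where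
  "smooth_fun_on U f \<longleftrightarrow> (\<forall>is. iter_pd f is differentiable_on U)"

definition minkowski :: "real^4^4" where
  "minkowski = (\<chi> i j. if i = j then (if i = 0 then -1 else 1) else 0)"

definition lorentzian_metric_on :: "(real^4) set \<Rightarrow> (real^4 \<Rightarrow> real^4^4) \<Rightarrow> bool" where
  "lorentzian_metric_on U g \<longleftrightarrow>
     (\<forall>x\<in>U. transpose (g x) = g x \<and>
        (\<exists>P. invertible P \<and> g x = transpose P ** minkowski ** P)) \<and>
     (\<forall>i j. smooth_fun_on U (\<lambda>x. g x $ i $ j))"

definition ginv :: "(real^4 \<Rightarrow> real^4^4) \<Rightarrow> real^4 \<Rightarrow> 4 \<Rightarrow> 4 \<Rightarrow> real" where
  "ginv g x i j = matrix_inv (g x) $ i $ j"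

definition christoffel :: "(real^4 \<Rightarrow> real^4^4) \<Rightarrow> real^4 \<Rightarrow> 4 \<Rightarrow> 4 \<Rightarrow> 4 \<Rightarrow> real" where
  "christoffel g x a b c = (1/2) * (\<Sum>d\<in>UNIV. ginv g x a d *
      (pd (\<lambda>y. g y $ d $ b) c x + pd (\<lambda>y. g y $ d $ c) b x - pd (\<lambda>y. g y $ b $ c) d x))"

definition riem_up :: "(real^4 \<Rightarrow> real^4^4) \<Rightarrow> real^4 \<Rightarrow> 4 \<Rightarrow> 4 \<Rightarrow> 4 \<Rightarrow> 4 \<Rightarrow> real" where
  "riem_up g x a b c d =
     pd (\<lambda>y. christoffel g y a d b) c x - pd (\<lambda>y. christoffel g y a c b) d x
     + (\<Sum>e\<in>UNIV. christoffel g x a c e * christoffel g x e d b)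
     - (\<Sum>e\<in>UNIV. christoffel g x a d e * christoffel g x e c b)"

definition riem :: "(real^4 \<Rightarrow> real^4^4) \<Rightarrow> real^4 \<Rightarrow> 4 \<Rightarrow> 4 \<Rightarrow> 4 \<Rightarrow> 4 \<Rightarrow> real" where
  "riem g x j k l m = (\<Sum>e\<in>UNIV. g x $ j $ e * riem_up g x e k l m)"

definition ricci :: "(real^4 \<Rightarrow> real^4^4) \<Rightarrow> real^4 \<Rightarrow> 4 \<Rightarrow> 4 \<Rightarrow> real" where
  "ricci g x k l = - (\<Sum>m\<in>UNIV. \<Sum>p\<in>UNIV. ginv g x m p * riem g x m k l p)"

definition scal :: "(real^4 \<Rightarrow> real^4^4) \<Rightarrow> real^4 \<Rightarrow> real" where
  "scal g x = (\<Sum>m\<in>UNIV. \<Sum>l\<in>UNIV. ginv g x m l * ricci g x m l)"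

text \<open>Weyl tensor for n = 4.\<close>
definition weyl :: "(real^4 \<Rightarrow> real^4^4) \<Rightarrow> real^4 \<Rightarrow> 4 \<Rightarrow> 4 \<Rightarrow> 4 \<Rightarrow> 4 \<Rightarrow> real" where
  "weyl g x j k l m = riem g x j k l m
     + (1/2) * (g x $ m $ j * ricci g x k l - g x $ m $ k * ricci g x j l
                + ricci g x m j * g x $ k $ l - ricci g x m k * g x $ j $ l)
     - scal g x / 6 * (g x $ m $ j * g x $ k $ l - g x $ m $ k * g x $ j $ l)"

definition cov_weyl :: "(real^4 \<Rightarrow> real^4^4) \<Rightarrow> real^4 \<Rightarrow> 4 \<Rightarrow> 4 \<Rightarrow> 4 \<Rightarrow> 4 \<Rightarrow> 4 \<Rightarrow> real" where
  "cov_weyl g x i j k l m = pd (\<lambda>y. weyl g y j k l m) i x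
     - (\<Sum>p\<in>UNIV. christoffel g x p i j * weyl g x p k l m
                 + christoffel g x p i k * weyl g x j p l m
                 + christoffel g x p i l * weyl g x j k p m
                 + christoffel g x p i m * weyl g x j k l p)"

text \<open>(CQR)_4 on U with fundamental (co)vector field A (components A_i).\<close>
definition CQR4 :: "(real^4) set \<Rightarrow> (real^4 \<Rightarrow> real^4^4) \<Rightarrow> (real^4 \<Rightarrow> real^4) \<Rightarrow> bool" where
  "CQR4 U g A \<longleftrightarrow>
     (\<exists>x\<in>U. \<exists>j k l m. weyl g x j k l m \<noteq> 0) \<and>
     (\<exists>x\<in>U. A x \<noteq> 0) \<and>
     (\<forall>x\<in>U. \<forall>i j k l m. cov_weyl g x i j k l m =
        2 * A x $ i * weyl g x j k l m + A x $ j * weyl g x i k l m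
        + A x $ k * weyl g x j i l m + A x $ l * weyl g x j k i m
        + A x $ m * weyl g x j k l i)"

definition raise :: "(real^4 \<Rightarrow> real^4^4) \<Rightarrow> real^4 \<Rightarrow> real^4 \<Rightarrow> 4 \<Rightarrow> real" where
  "raise g x v m = (\<Sum>p\<in>UNIV. ginv g x m p * v $ p)"

end

theory Submission
  imports Defs
begin

(*
  Tracing the recurrence \<nabla>_i C_jklm = 2 A_i C_jklm + A_j C_iklm + A_k C_jilm + A_l C_jkim + A_m C_jkli
  with g^jm kills every term containing a trace of the (trace-free) Weyl tensor, and the left-hand
  side vanishes because the connection is metric.  What is left says that P_ikl = C_iklm A^m is
  invariant under cyclic permutation of its indices; since P is antisymmetric in its first two
  indices and satisfies the first Bianchi identity, it vanishes: C_jklm A^m = 0.  If A were not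
  null, it could be completed to a g-orthogonal frame; in that frame C has no component along A,
  so it is an algebraic curvature tensor on the 3-dimensional complement with vanishing Ricci
  contraction, hence C = 0 at the point.

  Pointwise, every curvature quantity is a polynomial in g, its inverse and the first two
  derivatives of g; the algebraic identities are proved for such 2-jets (locale metric_jet), and
  the only analytic input is the symmetry of second partial derivatives.
*)

lemma sum_kronecker_left [simp]:
  fixes f :: "'a::finite \<Rightarrow> 'b::comm_semiring_1"
  shows "(\<Sum>k\<in>UNIV. (if a = k then 1 else 0) * f k) = f a"
  by (simp flip: of_bool_def)

lemma sum_kronecker_right [simp]:
  fixes f :: "'a::finite \<Rightarrow> 'b::comm_semiring_1"
  shows "(\<Sum>k\<in>UNIV. (if k = a then 1 else 0) * f k) = f a"
  by (simp flip: of_bool_def)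

lemma pd_eq_derivative: "(f has_derivative f') (at x) \<Longrightarrow> pd f i x = f' (axis i 1)"
  unfolding pd_def using frechet_derivative_at by metis

lemma pd_add:
  assumes "f differentiable (at x)" "g differentiable (at x)"
  shows "pd (\<lambda>y. f y + g y) i x = pd f i x + pd g i x"
  using pd_eq_derivative[OF has_derivative_add[OF assms[unfolded frechet_derivative_works]]]
  by (simp add: pd_def)

lemma pd_diff:
  assumes "f differentiable (at x)" "g differentiable (at x)"
  shows "pd (\<lambda>y. f y - g y) i x = pd f i x - pd g i x"
  using pd_eq_derivative[OF has_derivative_diff[OF assms[unfolded frechet_derivative_works]]]
  by (simp add: pd_def)

lemma pd_mult:
  assumes "f differentiable (at x)" "g differentiable (at x)"
  shows "pd (\<lambda>y. f y * g y) i x = pd f i x * g x + f x * pd g i x"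
  using pd_eq_derivative[OF has_derivative_mult[OF assms[unfolded frechet_derivative_works]]]
  by (simp add: pd_def)

lemma pd_const [simp]: "pd (\<lambda>y. c) i x = 0"
  by (rule trans[OF pd_eq_derivative[OF has_derivative_const]]) simp

lemma pd_divide_const: "f differentiable (at x) \<Longrightarrow> pd (\<lambda>y. f y / c) i x = pd f i x / c"
  using pd_mult[of "\<lambda>y. 1 / c" x f i] by (simp add: mult.commute)

lemma pd_sum:
  "finite S \<Longrightarrow> (\<And>a. a \<in> S \<Longrightarrow> f a differentiable (at x)) \<Longrightarrow>
    pd (\<lambda>y. \<Sum>a\<in>S. f a y) i x = (\<Sum>a\<in>S. pd (f a) i x)"
proof (induction S rule: finite_induct)
  case (insert a S)
  then have "pd (\<lambda>y. f a y + (\<Sum>a\<in>S. f a y)) i x = pd (f a) i x + pd (\<lambda>y. \<Sum>a\<in>S. f a y) i x"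
    by (intro pd_add) auto
  with insert show ?case by simp
qed simp

lemma pd_cong_open:
  assumes "open U" "x \<in> U" "\<And>y. y \<in> U \<Longrightarrow> f y = g y"
  shows "pd f i x = pd g i x"
proof -
  have "(f has_derivative D) (at x) \<longleftrightarrow> (g has_derivative D) (at x)" for D
    using has_derivative_transform_within_open[OF _ assms(1,2), of f _ UNIV g]
      has_derivative_transform_within_open[OF _ assms(1,2), of g _ UNIV f] assms(3)
    by auto
  then show ?thesis unfolding pd_def frechet_derivative_def by simp
qed

lemma differentiable_cong_open:
  assumes "open U" "x \<in> U" "\<And>y. y \<in> U \<Longrightarrow> f y = g y" "f differentiable (at x)"
  shows "g differentiable (at x)"
  using has_derivative_transform_within_open[OF _ assms(1,2), of f _ UNIV g] assms(3,4)
  unfolding differentiable_def by auto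

lemma has_real_derivative_along_line:
  fixes f :: "'a::real_normed_vector \<Rightarrow> real"
  assumes "f differentiable (at (p + t *\<^sub>R v))"
  shows "((\<lambda>s. f (p + s *\<^sub>R v)) has_real_derivative frechet_derivative f (at (p + t *\<^sub>R v)) v) (at t)"
proof -
  let ?D = "frechet_derivative f (at (p + t *\<^sub>R v))"
  have "((\<lambda>s. p + s *\<^sub>R v) has_derivative (\<lambda>s. s *\<^sub>R v)) (at t)"
    by (auto intro!: derivative_eq_intros)
  from has_derivative_compose[OF this assms[unfolded frechet_derivative_works]]
  have "((\<lambda>s. f (p + s *\<^sub>R v)) has_derivative (\<lambda>s. ?D (s *\<^sub>R v))) (at t)" .
  moreover have "linear ?D"
    using assms frechet_derivative_works has_derivative_linear by blast
  then have "(\<lambda>s. ?D (s *\<^sub>R v)) = (\<lambda>s. ?D v * s)"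
    by (auto simp: linear_scale)
  ultimately show ?thesis
    unfolding has_field_derivative_def by (simp add: mult.commute[of _ "?D v"])
qed

lemma pd_translate:
  assumes "f differentiable (at (y + c))"
  shows "pd (\<lambda>z. f (z + c)) i y = pd f i (y + c)"
proof -
  have "((\<lambda>z. z + c) has_derivative (\<lambda>z. z)) (at y)"
    by (auto intro!: derivative_eq_intros)
  from pd_eq_derivative[OF has_derivative_compose[OF this assms[unfolded frechet_derivative_works]]]
  show ?thesis by (simp add: pd_def)
qed

lemma mean_value_along_axis:
  fixes f :: "real^4 \<Rightarrow> real"
  assumes "0 < h" and "\<And>t. 0 \<le> t \<Longrightarrow> t \<le> h \<Longrightarrow> f differentiable (at (p + t *\<^sub>R axis i 1))"
  shows "\<exists>t>0. t < h \<and> f (p + h *\<^sub>R axis i 1) - f p = h * pd f i (p + t *\<^sub>R axis i 1)"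
proof -
  have "((\<lambda>s. f (p + s *\<^sub>R axis i 1)) has_real_derivative pd f i (p + t *\<^sub>R axis i 1)) (at t)"
    if "0 \<le> t" "t \<le> h" for t
    using has_real_derivative_along_line[OF assms(2)[OF that]] by (simp add: pd_def)
  from MVT2[OF assms(1) this] show ?thesis by auto
qed

lemma axis_square_in_ball:
  fixes x :: "real^4" and i j :: 4
  assumes "0 \<le> s" "s \<le> h" "0 \<le> t" "t \<le> h" "2 * h < d"
  shows "dist (x + s *\<^sub>R axis i 1 + t *\<^sub>R axis j 1) x < d"
proof -
  have "norm (s *\<^sub>R axis i 1 + t *\<^sub>R axis j 1 :: real^4)
      \<le> norm (s *\<^sub>R axis i 1 :: real^4) + norm (t *\<^sub>R axis j 1 :: real^4)"
    by (rule norm_triangle_ineq)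
  also have "\<dots> \<le> h + h" using assms by simp
  finally show ?thesis using assms by (simp add: dist_norm)
qed

lemma second_difference_mean_value:
  fixes f :: "real^4 \<Rightarrow> real" and i j :: 4
  assumes U: "open U" "ball x d \<subseteq> U" and h: "0 < h" "2 * h < d"
    and f: "f differentiable_on U" and fi: "pd f i differentiable_on U"
  defines "ei \<equiv> axis i 1 :: real^4" and "ej \<equiv> axis j 1 :: real^4"
  shows "\<exists>p. dist p x < d \<and>
    f (x + h *\<^sub>R ei + h *\<^sub>R ej) - f (x + h *\<^sub>R ej) - f (x + h *\<^sub>R ei) + f x = h * h * pd (pd f i) j p"
proof -
  have square: "dist (x + s *\<^sub>R ei + t *\<^sub>R ej) x < d" "x + s *\<^sub>R ei + t *\<^sub>R ej \<in> U"
    if "0 \<le> s" "s \<le> h" "0 \<le> t" "t \<le> h" for s t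
    using axis_square_in_ball[OF that h(2)] U(2) by (auto simp: ei_def ej_def dist_commute)
  have at: "F differentiable (at y)" if "F differentiable_on U" "y \<in> U" for F :: "real^4 \<Rightarrow> real" and y
    using that U(1) differentiable_on_eq_differentiable_at by blast
  define F where "F y = f (y + h *\<^sub>R ej) - f y" for y
  have dF: "F differentiable (at (x + t *\<^sub>R ei))"
    and pdF: "pd F i (x + t *\<^sub>R ei) = pd f i (x + t *\<^sub>R ei + h *\<^sub>R ej) - pd f i (x + t *\<^sub>R ei)"
    if "0 \<le> t" "t \<le> h" for t
  proof -
    have "f differentiable (at (x + t *\<^sub>R ei + h *\<^sub>R ej))" "f differentiable (at (x + t *\<^sub>R ei))"
      using at[OF f square(2)[of t h]] at[OF f square(2)[of t 0]] that h by auto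
    moreover have "(\<lambda>y. f (y + h *\<^sub>R ej)) differentiable (at (x + t *\<^sub>R ei))"
      using differentiable_chain_at[of "\<lambda>y. y + h *\<^sub>R ej" "x + t *\<^sub>R ei" f] calculation(1)
      by (simp add: o_def)
    ultimately show "F differentiable (at (x + t *\<^sub>R ei))"
      and "pd F i (x + t *\<^sub>R ei) = pd f i (x + t *\<^sub>R ei + h *\<^sub>R ej) - pd f i (x + t *\<^sub>R ei)"
      unfolding F_def by (auto simp: pd_diff pd_translate)
  qed
  obtain s where s: "0 < s" "s < h" "F (x + h *\<^sub>R ei) - F x = h * pd F i (x + s *\<^sub>R ei)"
    using mean_value_along_axis[OF h(1), of F x i] dF unfolding ei_def by auto
  obtain t where t: "0 < t" "t < h"
    "pd f i (x + s *\<^sub>R ei + h *\<^sub>R ej) - pd f i (x + s *\<^sub>R ei) = h * pd (pd f i) j (x + s *\<^sub>R ei + t *\<^sub>R ej)"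
    using mean_value_along_axis[OF h(1), of "pd f i" "x + s *\<^sub>R ei" j] at[OF fi square(2)] s
    unfolding ej_def by auto
  have "f (x + h *\<^sub>R ei + h *\<^sub>R ej) - f (x + h *\<^sub>R ej) - f (x + h *\<^sub>R ei) + f x
      = F (x + h *\<^sub>R ei) - F x"
    by (simp add: F_def algebra_simps)
  also have "\<dots> = h * h * pd (pd f i) j (x + s *\<^sub>R ei + t *\<^sub>R ej)"
    using s t pdF[of s] by simp
  finally show ?thesis using square(1)[of s t] s t by auto
qed

lemma mixed_partials_meet:
  fixes f :: "real^4 \<Rightarrow> real"
  assumes U: "open U" "ball x d \<subseteq> U" "0 < d" and f: "f differentiable_on U"
    and fi: "pd f i differentiable_on U" and fj: "pd f j differentiable_on U"
  shows "\<exists>p q. dist p x < d \<and> dist q x < d \<and> pd (pd f i) j p = pd (pd f j) i q"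
proof -
  define h where "h = d / 3"
  have h: "0 < h" "2 * h < d" using U(3) by (auto simp: h_def)
  obtain p where p: "dist p x < d" "f (x + h *\<^sub>R axis i 1 + h *\<^sub>R axis j 1)
      - f (x + h *\<^sub>R axis j 1) - f (x + h *\<^sub>R axis i 1) + f x = h * h * pd (pd f i) j p"
    using second_difference_mean_value[OF U(1,2) h f fi] by blast
  obtain q where q: "dist q x < d" "f (x + h *\<^sub>R axis j 1 + h *\<^sub>R axis i 1)
      - f (x + h *\<^sub>R axis i 1) - f (x + h *\<^sub>R axis j 1) + f x = h * h * pd (pd f j) i q"
    using second_difference_mean_value[OF U(1,2) h f fj] by blast
  have swap: "x + h *\<^sub>R axis j 1 + h *\<^sub>R axis i 1 = x + h *\<^sub>R axis i 1 + h *\<^sub>R axis j 1"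
    by (simp add: algebra_simps)
  have "h * h * pd (pd f i) j p = h * h * pd (pd f j) i q" using p(2) q(2) unfolding swap by linarith
  then show ?thesis using p(1) q(1) h by auto
qed

lemma pd_commute:
  fixes f :: "real^4 \<Rightarrow> real"
  assumes U: "open U" "x \<in> U" and f: "f differentiable_on U"
    and fi: "pd f i differentiable_on U" and fj: "pd f j differentiable_on U"
    and fij: "pd (pd f i) j differentiable_on U" and fji: "pd (pd f j) i differentiable_on U"
  shows "pd (pd f i) j x = pd (pd f j) i x"
proof -
  let ?F1 = "pd (pd f i) j" and ?F2 = "pd (pd f j) i"
  have "isCont ?F1 x" "isCont ?F2 x"
    using differentiable_imp_continuous_on[OF fij] differentiable_imp_continuous_on[OF fji] U
      continuous_on_eq_continuous_at by blast+
  have close: "\<bar>?F1 x - ?F2 x\<bar> < 2 * e" if "e > 0" for e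
  proof -
    obtain d1 where d1: "d1 > 0" "\<And>y. dist y x < d1 \<Longrightarrow> \<bar>?F1 y - ?F1 x\<bar> < e"
      using \<open>isCont ?F1 x\<close> \<open>e > 0\<close> unfolding continuous_at_eps_delta dist_real_def by meson
    obtain d2 where d2: "d2 > 0" "\<And>y. dist y x < d2 \<Longrightarrow> \<bar>?F2 y - ?F2 x\<bar> < e"
      using \<open>isCont ?F2 x\<close> \<open>e > 0\<close> unfolding continuous_at_eps_delta dist_real_def by meson
    obtain d3 where d3: "d3 > 0" "ball x d3 \<subseteq> U" using U open_contains_ball_eq by meson
    have "ball x (min d1 (min d2 d3)) \<subseteq> U" "0 < min d1 (min d2 d3)" using d1 d2 d3 by auto
    then obtain p q where "dist p x < min d1 (min d2 d3)" "dist q x < min d1 (min d2 d3)" "?F1 p = ?F2 q"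
      using mixed_partials_meet[OF U(1) _ _ f fi fj] by blast
    then show ?thesis using d1(2)[of p] d2(2)[of q] by auto
  qed
  have "\<bar>?F1 x - ?F2 x\<bar> \<le> 0"
  proof (rule field_le_epsilon)
    fix e :: real assume "0 < e"
    then show "\<bar>?F1 x - ?F2 x\<bar> \<le> 0 + e" using close[of "e / 2"] by simp
  qed
  then show ?thesis by simp
qed

definition algebraic_curvature :: "('a \<Rightarrow> 'a \<Rightarrow> 'a \<Rightarrow> 'a \<Rightarrow> real) \<Rightarrow> bool" where
  "algebraic_curvature T \<longleftrightarrow> (\<forall>j k l m.
     T j k l m = - T k j l m \<and> T j k l m = - T j k m l \<and> T j k l m + T j l m k + T j m k l = 0)"

definition trace_free :: "('a \<Rightarrow> 'a \<Rightarrow> real) \<Rightarrow> ('a \<Rightarrow> 'a \<Rightarrow> 'a \<Rightarrow> 'a \<Rightarrow> real) \<Rightarrow> bool" where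
  "trace_free H T \<longleftrightarrow> (\<forall>k l. (\<Sum>j\<in>UNIV. \<Sum>m\<in>UNIV. H j m * T j k l m) = 0)"

lemma algebraic_curvatureI:
  assumes "\<And>j k l m. T j k l m = - T k j l m" "\<And>j k l m. T j k l m = - T j k m l"
    and "\<And>j k l m. T j k l m + T j l m k + T j m k l = 0"
  shows "algebraic_curvature T"
  using assms unfolding algebraic_curvature_def by blast

lemma algebraic_curvature_antisym12: "algebraic_curvature T \<Longrightarrow> T j k l m = - T k j l m"
  and algebraic_curvature_antisym34: "algebraic_curvature T \<Longrightarrow> T j k l m = - T j k m l"
  and algebraic_curvature_bianchi: "algebraic_curvature T \<Longrightarrow> T j k l m + T j l m k + T j m k l = 0"
  unfolding algebraic_curvature_def by blast+

lemma algebraic_curvature_pair_sym: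
  assumes "algebraic_curvature T"
  shows "T j k l m = T l m j k"
proof -
  note a12 = algebraic_curvature_antisym12[OF assms]
    and a34 = algebraic_curvature_antisym34[OF assms]
    and cyc = algebraic_curvature_bianchi[OF assms]
  show ?thesis
    using cyc[of j k l m] cyc[of k l m j] cyc[of l m j k] cyc[of m j k l]
      a12[of k j l m] a12[of l m j k] a34[of l m j k] a12[of m l j k] a34[of m l k j]
      a12[of j l m k] a34[of l j m k] a12[of j m k l] a34[of m j k l]
      a12[of k l m j] a34[of l k m j] a12[of k m j l] a34[of m k j l]
      a12[of l j k m] a34[of j l k m] a12[of l k m j] a34[of k l m j]
      a12[of m j k l] a12[of m k l j] a34[of k m l j]
    by linarith
qed

lemma sum_scale_contract:
  "(\<Sum>j\<in>UNIV. \<Sum>m\<in>UNIV. H j m * (c * X j m)) = c * (\<Sum>j\<in>UNIV. \<Sum>m\<in>UNIV. H j m * X j m)"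
  for H X :: "'a::finite \<Rightarrow> 'a \<Rightarrow> real"
  by (simp add: sum_distrib_left mult_ac)

lemma algebraic_curvature_contraction_zero:
  assumes T: "algebraic_curvature T"
    and cycle: "\<And>i k l. (\<Sum>m\<in>UNIV. T i k l m * a m) = (\<Sum>m\<in>UNIV. T l i k m * a m)"
  shows "(\<Sum>m\<in>UNIV. T j k l m * a m) = 0"
proof -
  define P where "P i k l = (\<Sum>m\<in>UNIV. T i k l m * a m)" for i k l
  have antisym: "P i k l = - P k i l" for i k l
    unfolding P_def by (subst algebraic_curvature_antisym12[OF T]) (simp add: sum_negf)
  have bianchi: "P i k l - P i l k + P k l i = 0" for i k l
  proof -
    have "T i k l m + T i l m k + T i m k l = T i k l m - T i l k m + T k l i m" for m
      using algebraic_curvature_antisym34[OF T, of i l m k] algebraic_curvature_pair_sym[OF T, of i m k l]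
      by simp
    then have "(\<Sum>m\<in>UNIV. (T i k l m - T i l k m + T k l i m) * a m) = 0"
      using algebraic_curvature_bianchi[OF T] by simp
    then show ?thesis unfolding P_def by (simp add: algebra_simps sum.distrib sum_subtractf)
  qed
  have "P j k l = 0"
    using bianchi[of j k l] cycle[of j k l, folded P_def] cycle[of k l j, folded P_def]
      cycle[of l j k, folded P_def] antisym[of l j k]
    by linarith
  then show ?thesis unfolding P_def .
qed

lemma annihilates_of_traced_recurrence:
  fixes T :: "'a::finite \<Rightarrow> 'a \<Rightarrow> 'a \<Rightarrow> 'a \<Rightarrow> real"
  assumes T: "algebraic_curvature T" and tr: "trace_free H T" and H: "\<And>a b. H a b = H b a"
    and rec: "\<And>i k l. (\<Sum>j\<in>UNIV. \<Sum>m\<in>UNIV. H j m * (2 * A i * T j k l m + A j * T i k l m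
        + A k * T j i l m + A l * T j k i m + A m * T j k l i)) = 0"
  shows "(\<Sum>m\<in>UNIV. T j k l m * (\<Sum>p\<in>UNIV. H m p * A p)) = 0"
proof (rule algebraic_curvature_contraction_zero[OF T])
  define a where "a m = (\<Sum>p\<in>UNIV. H m p * A p)" for m
  fix i k l
  have tr': "(\<Sum>j\<in>UNIV. \<Sum>m\<in>UNIV. H j m * T j k l m) = 0" for k l
    using tr unfolding trace_free_def by blast
  have mid: "(\<Sum>j\<in>UNIV. \<Sum>m\<in>UNIV. H j m * (A j * T i k l m)) = (\<Sum>m\<in>UNIV. T i k l m * a m)"
    by (subst sum.swap) (simp add: a_def sum_distrib_left mult_ac H)
  have last: "(\<Sum>j\<in>UNIV. \<Sum>m\<in>UNIV. H j m * (A m * T j k l i)) = (\<Sum>j\<in>UNIV. a j * T j k l i)"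
    unfolding a_def by (simp add: sum_distrib_left sum_distrib_right mult_ac)
  \<comment> \<open>tracing the recurrence over (j, m) leaves two terms, the others being traces of T\<close>
  have "(\<Sum>j\<in>UNIV. \<Sum>m\<in>UNIV. H j m * (2 * A i * T j k l m + A j * T i k l m
      + A k * T j i l m + A l * T j k i m + A m * T j k l i)) =
    2 * A i * (\<Sum>j\<in>UNIV. \<Sum>m\<in>UNIV. H j m * T j k l m)
    + (\<Sum>j\<in>UNIV. \<Sum>m\<in>UNIV. H j m * (A j * T i k l m))
    + A k * (\<Sum>j\<in>UNIV. \<Sum>m\<in>UNIV. H j m * T j i l m)
    + A l * (\<Sum>j\<in>UNIV. \<Sum>m\<in>UNIV. H j m * T j k i m)
    + (\<Sum>j\<in>UNIV. \<Sum>m\<in>UNIV. H j m * (A m * T j k l i))"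
    using sum_scale_contract[of H] by (simp add: distrib_left sum.distrib mult.assoc)
  then have "(\<Sum>m\<in>UNIV. T i k l m * a m) = - (\<Sum>j\<in>UNIV. a j * T j k l i)"
    using rec[of i k l] tr' mid last by simp
  also have "\<dots> = (\<Sum>m\<in>UNIV. T l i k m * a m)"
  proof -
    have "T j k l i = - T l i k j" for j
      using algebraic_curvature_pair_sym[OF T, of j k l i] algebraic_curvature_antisym34[OF T, of l i j k]
      by simp
    then show ?thesis by (simp add: sum_negf mult.commute)
  qed
  finally show "(\<Sum>m\<in>UNIV. T i k l m * (\<Sum>p\<in>UNIV. H m p * A p))
      = (\<Sum>m\<in>UNIV. T l i k m * (\<Sum>p\<in>UNIV. H m p * A p))"
    unfolding a_def .
qed

lemma sum_contract_swap:
  fixes H :: "'a::finite \<Rightarrow> 'a \<Rightarrow> real"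
  shows "(\<Sum>j\<in>UNIV. \<Sum>m\<in>UNIV. H j m * (\<Sum>p\<in>UNIV. c p * X p j m))
    = (\<Sum>p\<in>UNIV. c p * (\<Sum>j\<in>UNIV. \<Sum>m\<in>UNIV. H j m * X p j m))"
proof -
  have "(\<Sum>j\<in>UNIV. \<Sum>m\<in>UNIV. H j m * (\<Sum>p\<in>UNIV. c p * X p j m))
      = (\<Sum>j\<in>UNIV. \<Sum>p\<in>UNIV. \<Sum>m\<in>UNIV. c p * (H j m * X p j m))"
    by (simp add: sum_distrib_left mult_ac) (rule sum.cong[OF refl], rule sum.swap)
  also have "\<dots> = (\<Sum>p\<in>UNIV. c p * (\<Sum>j\<in>UNIV. \<Sum>m\<in>UNIV. H j m * X p j m))"
    by (subst sum.swap) (simp add: sum_distrib_left)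
  finally show ?thesis .
qed

lemma sum_contract_first_slot:
  fixes H :: "'a::finite \<Rightarrow> 'a \<Rightarrow> real"
  shows "(\<Sum>j\<in>UNIV. \<Sum>m\<in>UNIV. H j m * (\<Sum>p\<in>UNIV. c p j * X p m))
    = (\<Sum>j\<in>UNIV. \<Sum>m\<in>UNIV. X j m * (\<Sum>q\<in>UNIV. H q m * c j q))"
proof -
  have "(\<Sum>j\<in>UNIV. \<Sum>m\<in>UNIV. H j m * (\<Sum>p\<in>UNIV. c p j * X p m))
      = (\<Sum>j\<in>UNIV. \<Sum>p\<in>UNIV. \<Sum>m\<in>UNIV. X p m * (H j m * c p j))"
    by (simp add: sum_distrib_left mult_ac) (rule sum.cong[OF refl], rule sum.swap)
  also have "\<dots> = (\<Sum>p\<in>UNIV. \<Sum>m\<in>UNIV. \<Sum>j\<in>UNIV. X p m * (H j m * c p j))"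
    by (subst sum.swap) (rule sum.cong[OF refl], rule sum.swap)
  finally show ?thesis by (simp add: sum_distrib_left)
qed

lemma sum_contract_last_slot:
  fixes H :: "'a::finite \<Rightarrow> 'a \<Rightarrow> real"
  shows "(\<Sum>j\<in>UNIV. \<Sum>m\<in>UNIV. H j m * (\<Sum>p\<in>UNIV. c p m * X j p))
    = (\<Sum>j\<in>UNIV. \<Sum>m\<in>UNIV. X j m * (\<Sum>q\<in>UNIV. H j q * c m q))"
proof -
  have "(\<Sum>j\<in>UNIV. \<Sum>m\<in>UNIV. H j m * (\<Sum>p\<in>UNIV. c p m * X j p))
      = (\<Sum>j\<in>UNIV. \<Sum>p\<in>UNIV. \<Sum>m\<in>UNIV. X j p * (H j m * c p m))"
    by (simp add: sum_distrib_left mult_ac) (rule sum.cong[OF refl], rule sum.swap)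
  then show ?thesis by (simp add: sum_distrib_left)
qed

(* DG c a b and DDG d c a b stand for the values of \<partial>_c g_ab and \<partial>_d \<partial>_c g_ab at a point. *)
definition christoffel_first :: "(4 \<Rightarrow> 4 \<Rightarrow> 4 \<Rightarrow> real) \<Rightarrow> 4 \<Rightarrow> 4 \<Rightarrow> 4 \<Rightarrow> real" where
  "christoffel_first DG d b c = (DG c d b + DG b d c - DG d b c) / 2"

definition christoffel_first_deriv :: "(4 \<Rightarrow> 4 \<Rightarrow> 4 \<Rightarrow> 4 \<Rightarrow> real) \<Rightarrow> 4 \<Rightarrow> 4 \<Rightarrow> 4 \<Rightarrow> 4 \<Rightarrow> real" where
  "christoffel_first_deriv DDG l d b c = (DDG l c d b + DDG l b d c - DDG l d b c) / 2"

definition riem_jet ::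
    "(4 \<Rightarrow> 4 \<Rightarrow> real) \<Rightarrow> (4 \<Rightarrow> 4 \<Rightarrow> 4 \<Rightarrow> real) \<Rightarrow> (4 \<Rightarrow> 4 \<Rightarrow> 4 \<Rightarrow> 4 \<Rightarrow> real) \<Rightarrow> 4 \<Rightarrow> 4 \<Rightarrow> 4 \<Rightarrow> 4 \<Rightarrow> real" where
  "riem_jet H DG DDG j k l m = christoffel_first_deriv DDG l j m k - christoffel_first_deriv DDG m j l k
     - (\<Sum>p\<in>UNIV. \<Sum>q\<in>UNIV. H p q * christoffel_first DG p j l * christoffel_first DG q m k)
     + (\<Sum>p\<in>UNIV. \<Sum>q\<in>UNIV. H p q * christoffel_first DG p j m * christoffel_first DG q l k)"

definition ricci_jet ::
    "(4 \<Rightarrow> 4 \<Rightarrow> real) \<Rightarrow> (4 \<Rightarrow> 4 \<Rightarrow> 4 \<Rightarrow> real) \<Rightarrow> (4 \<Rightarrow> 4 \<Rightarrow> 4 \<Rightarrow> 4 \<Rightarrow> real) \<Rightarrow> 4 \<Rightarrow> 4 \<Rightarrow> real" where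
  "ricci_jet H DG DDG k l = - (\<Sum>m\<in>UNIV. \<Sum>p\<in>UNIV. H m p * riem_jet H DG DDG m k l p)"

definition scal_jet ::
    "(4 \<Rightarrow> 4 \<Rightarrow> real) \<Rightarrow> (4 \<Rightarrow> 4 \<Rightarrow> 4 \<Rightarrow> real) \<Rightarrow> (4 \<Rightarrow> 4 \<Rightarrow> 4 \<Rightarrow> 4 \<Rightarrow> real) \<Rightarrow> real" where
  "scal_jet H DG DDG = (\<Sum>m\<in>UNIV. \<Sum>l\<in>UNIV. H m l * ricci_jet H DG DDG m l)"

definition weyl_jet :: "(4 \<Rightarrow> 4 \<Rightarrow> real) \<Rightarrow> (4 \<Rightarrow> 4 \<Rightarrow> real) \<Rightarrow> (4 \<Rightarrow> 4 \<Rightarrow> 4 \<Rightarrow> real)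
    \<Rightarrow> (4 \<Rightarrow> 4 \<Rightarrow> 4 \<Rightarrow> 4 \<Rightarrow> real) \<Rightarrow> 4 \<Rightarrow> 4 \<Rightarrow> 4 \<Rightarrow> 4 \<Rightarrow> real" where
  "weyl_jet G H DG DDG j k l m = riem_jet H DG DDG j k l m
     + (1/2) * (G m j * ricci_jet H DG DDG k l - G m k * ricci_jet H DG DDG j l
                + ricci_jet H DG DDG m j * G k l - ricci_jet H DG DDG m k * G j l)
     - scal_jet H DG DDG / 6 * (G m j * G k l - G m k * G j l)"

definition christoffel_jet :: "(4 \<Rightarrow> 4 \<Rightarrow> real) \<Rightarrow> (4 \<Rightarrow> 4 \<Rightarrow> 4 \<Rightarrow> real) \<Rightarrow> 4 \<Rightarrow> 4 \<Rightarrow> 4 \<Rightarrow> real" where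
  "christoffel_jet H DG a b c = (\<Sum>d\<in>UNIV. H a d * christoffel_first DG d b c)"

definition ginv_deriv_jet :: "(4 \<Rightarrow> 4 \<Rightarrow> real) \<Rightarrow> (4 \<Rightarrow> 4 \<Rightarrow> 4 \<Rightarrow> real) \<Rightarrow> 4 \<Rightarrow> 4 \<Rightarrow> 4 \<Rightarrow> real" where
  "ginv_deriv_jet H DG l a d = - (\<Sum>p\<in>UNIV. \<Sum>q\<in>UNIV. H a p * DG l p q * H q d)"

definition christoffel_deriv_jet :: "(4 \<Rightarrow> 4 \<Rightarrow> real) \<Rightarrow> (4 \<Rightarrow> 4 \<Rightarrow> 4 \<Rightarrow> real)
    \<Rightarrow> (4 \<Rightarrow> 4 \<Rightarrow> 4 \<Rightarrow> 4 \<Rightarrow> real) \<Rightarrow> 4 \<Rightarrow> 4 \<Rightarrow> 4 \<Rightarrow> 4 \<Rightarrow> real" where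
  "christoffel_deriv_jet H DG DDG l a b c = (\<Sum>d\<in>UNIV.
     ginv_deriv_jet H DG l a d * christoffel_first DG d b c + H a d * christoffel_first_deriv DDG l d b c)"

definition riem_up_jet :: "(4 \<Rightarrow> 4 \<Rightarrow> real) \<Rightarrow> (4 \<Rightarrow> 4 \<Rightarrow> 4 \<Rightarrow> real)
    \<Rightarrow> (4 \<Rightarrow> 4 \<Rightarrow> 4 \<Rightarrow> 4 \<Rightarrow> real) \<Rightarrow> 4 \<Rightarrow> 4 \<Rightarrow> 4 \<Rightarrow> 4 \<Rightarrow> real" where
  "riem_up_jet H DG DDG e k l m = christoffel_deriv_jet H DG DDG l e m k - christoffel_deriv_jet H DG DDG m e l k
     + (\<Sum>p\<in>UNIV. christoffel_jet H DG e l p * christoffel_jet H DG p m k)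
     - (\<Sum>p\<in>UNIV. christoffel_jet H DG e m p * christoffel_jet H DG p l k)"

locale metric_jet =
  fixes G H :: "4 \<Rightarrow> 4 \<Rightarrow> real" and DG :: "4 \<Rightarrow> 4 \<Rightarrow> 4 \<Rightarrow> real"
    and DDG :: "4 \<Rightarrow> 4 \<Rightarrow> 4 \<Rightarrow> 4 \<Rightarrow> real"
  assumes metric_sym: "G a b = G b a" and inverse_sym: "H a b = H b a"
    and inverse_left: "(\<Sum>k\<in>UNIV. H a k * G k b) = (if a = b then 1 else 0)"
    and inverse_right: "(\<Sum>k\<in>UNIV. G a k * H k b) = (if a = b then 1 else 0)"
    and dmetric_sym: "DG c a b = DG c b a"
    and ddmetric_sym: "DDG d c a b = DDG d c b a"
    and ddmetric_commute: "DDG d c a b = DDG c d a b"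
begin

abbreviation "\<Gamma> \<equiv> christoffel_first DG"
abbreviation "d\<Gamma> \<equiv> christoffel_first_deriv DDG"
abbreviation "R \<equiv> riem_jet H DG DDG"
abbreviation "Ric \<equiv> ricci_jet H DG DDG"
abbreviation "Scal \<equiv> scal_jet H DG DDG"
abbreviation "W \<equiv> weyl_jet G H DG DDG"
abbreviation "\<Gamma>\<^sub>2 \<equiv> christoffel_jet H DG"
abbreviation "dH \<equiv> ginv_deriv_jet H DG"
abbreviation "d\<Gamma>\<^sub>2 \<equiv> christoffel_deriv_jet H DG DDG"

lemma christoffel_first_sym: "\<Gamma> d b c = \<Gamma> d c b"
  unfolding christoffel_first_def by (simp add: dmetric_sym algebra_simps)

lemma christoffel_first_deriv_sym: "d\<Gamma> l d b c = d\<Gamma> l d c b"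
  unfolding christoffel_first_deriv_def by (simp add: ddmetric_sym algebra_simps)

lemma christoffel_first_add: "\<Gamma> d b c + \<Gamma> c b d = DG b d c"
  unfolding christoffel_first_def dmetric_sym[of c b d] dmetric_sym[of d c b] dmetric_sym[of b c d]
  by (simp add: field_simps)

lemma riem_jet_antisym34: "R j k l m = - R j k m l"
  unfolding riem_jet_def by simp

lemma riem_jet_antisym12: "R j k l m = - R k j l m"
proof -
  have "d\<Gamma> l j m k + d\<Gamma> l k m j = DDG l m j k" "d\<Gamma> m j l k + d\<Gamma> m k l j = DDG m l j k"
    unfolding christoffel_first_deriv_def
      ddmetric_sym[of l j m k] ddmetric_sym[of l k m j] ddmetric_sym[of l m k j]
      ddmetric_sym[of m j l k] ddmetric_sym[of m k l j] ddmetric_sym[of m l k j]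
    by (simp_all add: field_simps)
  moreover have "DDG l m j k = DDG m l j k" by (rule ddmetric_commute)
  moreover have swap: "(\<Sum>p\<in>UNIV. \<Sum>q\<in>UNIV. H p q * \<Gamma> p a b * \<Gamma> q c d)
      = (\<Sum>p\<in>UNIV. \<Sum>q\<in>UNIV. H p q * \<Gamma> p c d * \<Gamma> q a b)" for a b c d
    by (subst sum.swap) (simp add: inverse_sym mult_ac)
  have "(\<Sum>p\<in>UNIV. \<Sum>q\<in>UNIV. H p q * \<Gamma> p k m * \<Gamma> q l j)
      = (\<Sum>p\<in>UNIV. \<Sum>q\<in>UNIV. H p q * \<Gamma> p j l * \<Gamma> q m k)"
    "(\<Sum>p\<in>UNIV. \<Sum>q\<in>UNIV. H p q * \<Gamma> p k l * \<Gamma> q m j)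
      = (\<Sum>p\<in>UNIV. \<Sum>q\<in>UNIV. H p q * \<Gamma> p j m * \<Gamma> q l k)"
    using swap[of k m l j] swap[of k l m j] by (simp_all add: christoffel_first_sym)
  ultimately show ?thesis unfolding riem_jet_def by linarith
qed

lemma riem_jet_bianchi: "R j k l m + R j l m k + R j m k l = 0"
  unfolding riem_jet_def by (simp add: christoffel_first_deriv_sym christoffel_first_sym algebra_simps)

lemma riem_jet_algebraic_curvature: "algebraic_curvature R"
  by (intro algebraic_curvatureI riem_jet_antisym12 riem_jet_antisym34 riem_jet_bianchi)

lemma ricci_jet_sym: "Ric k l = Ric l k"
proof -
  have "R m k l p = R p l k m" for m p
    using algebraic_curvature_pair_sym[OF riem_jet_algebraic_curvature, of m k l p]
      riem_jet_antisym12[of l p m k] riem_jet_antisym34[of p l m k] by simp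
  then have "(\<Sum>m\<in>UNIV. \<Sum>p\<in>UNIV. H m p * R m k l p) = (\<Sum>p\<in>UNIV. \<Sum>m\<in>UNIV. H m p * R p l k m)"
    by (subst sum.swap) simp
  then show ?thesis unfolding ricci_jet_def by (simp add: inverse_sym)
qed

lemma weyl_jet_algebraic_curvature: "algebraic_curvature W"
proof (rule algebraic_curvatureI)
  fix j k l m
  note sym = metric_sym[of m j] metric_sym[of m k] metric_sym[of k j] metric_sym[of l j]
    metric_sym[of l k] metric_sym[of m l] ricci_jet_sym[of m j] ricci_jet_sym[of m k]
    ricci_jet_sym[of k j] ricci_jet_sym[of l j] ricci_jet_sym[of l k] ricci_jet_sym[of m l]
  show "W j k l m = - W k j l m"
    unfolding weyl_jet_def using riem_jet_antisym12[of j k l m] by (simp add: algebra_simps)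
  show "W j k l m = - W j k m l"
    unfolding weyl_jet_def riem_jet_antisym34[of j k l m] sym by (simp add: algebra_simps)
  show "W j k l m + W j l m k + W j m k l = 0"
    using riem_jet_bianchi[of j k l m] unfolding weyl_jet_def sym by (simp add: algebra_simps)
qed

lemma trace_inverse_metric: "(\<Sum>j\<in>UNIV. \<Sum>m\<in>UNIV. H j m * G m j) = 4"
  by (simp add: inverse_left)

lemma contract_inverse_metric_first: "(\<Sum>j\<in>UNIV. \<Sum>m\<in>UNIV. H j m * (G m k * X j)) = X k"
proof -
  have "(\<Sum>j\<in>UNIV. \<Sum>m\<in>UNIV. H j m * (G m k * X j)) = (\<Sum>j\<in>UNIV. (\<Sum>m\<in>UNIV. H j m * G m k) * X j)"
    by (simp add: sum_distrib_right sum_distrib_left mult_ac)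
  then show ?thesis by (simp add: inverse_left)
qed

lemma contract_inverse_metric_last: "(\<Sum>j\<in>UNIV. \<Sum>m\<in>UNIV. H j m * (X m * G j l)) = X l"
proof -
  have "(\<Sum>j\<in>UNIV. \<Sum>m\<in>UNIV. H j m * (X m * G j l)) = (\<Sum>m\<in>UNIV. (\<Sum>j\<in>UNIV. H m j * G j l) * X m)"
    by (subst sum.swap) (simp add: sum_distrib_right sum_distrib_left mult_ac inverse_sym)
  then show ?thesis by (simp add: inverse_left)
qed

lemma trace_ricci_jet: "(\<Sum>j\<in>UNIV. \<Sum>m\<in>UNIV. H j m * Ric m j) = Scal"
  unfolding scal_jet_def by (simp add: ricci_jet_sym)

lemma weyl_jet_trace_free: "trace_free H W"
  unfolding trace_free_def
proof (intro allI)
  fix k l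
  have "H j m * W j k l m = H j m * R j k l m + (1/2) * (Ric k l * (H j m * G m j))
     - (1/2) * (H j m * (G m k * Ric j l)) + (1/2) * G k l * (H j m * Ric m j)
     - (1/2) * (H j m * (Ric m k * G j l)) - Scal / 6 * G k l * (H j m * G m j)
     + Scal / 6 * (H j m * (G m k * G j l))" for j m
    unfolding weyl_jet_def by (simp add: algebra_simps)
  then have "(\<Sum>j\<in>UNIV. \<Sum>m\<in>UNIV. H j m * W j k l m) =
     (\<Sum>j\<in>UNIV. \<Sum>m\<in>UNIV. H j m * R j k l m) + (1/2) * Ric k l * (\<Sum>j\<in>UNIV. \<Sum>m\<in>UNIV. H j m * G m j)
     - (1/2) * (\<Sum>j\<in>UNIV. \<Sum>m\<in>UNIV. H j m * (G m k * Ric j l))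
     + (1/2) * G k l * (\<Sum>j\<in>UNIV. \<Sum>m\<in>UNIV. H j m * Ric m j)
     - (1/2) * (\<Sum>j\<in>UNIV. \<Sum>m\<in>UNIV. H j m * (Ric m k * G j l))
     - Scal / 6 * G k l * (\<Sum>j\<in>UNIV. \<Sum>m\<in>UNIV. H j m * G m j)
     + Scal / 6 * (\<Sum>j\<in>UNIV. \<Sum>m\<in>UNIV. H j m * (G m k * G j l))"
    by (simp add: sum.distrib sum_subtractf sum_distrib_left mult.assoc)
  also have "\<dots> = - Ric k l + 2 * Ric k l - (1/2) * Ric k l + (1/2) * G k l * Scal
     - (1/2) * Ric l k - Scal / 6 * G k l * 4 + Scal / 6 * G k l"
    unfolding trace_inverse_metric contract_inverse_metric_first contract_inverse_metric_last
      trace_ricci_jet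
    by (simp add: ricci_jet_def)
  also have "\<dots> = 0" using ricci_jet_sym[of l k] by simp
  finally show "(\<Sum>j\<in>UNIV. \<Sum>m\<in>UNIV. H j m * W j k l m) = 0" .
qed

lemma lower_christoffel_jet: "(\<Sum>e\<in>UNIV. G j e * \<Gamma>\<^sub>2 e b c) = \<Gamma> j b c"
proof -
  have "(\<Sum>e\<in>UNIV. G j e * \<Gamma>\<^sub>2 e b c) = (\<Sum>d\<in>UNIV. \<Sum>e\<in>UNIV. G j e * H e d * \<Gamma> d b c)"
    unfolding christoffel_jet_def by (subst sum.swap) (simp add: sum_distrib_left mult_ac)
  also have "\<dots> = \<Gamma> j b c" by (simp add: inverse_right flip: sum_distrib_right)
  finally show ?thesis .
qed

lemma lower_ginv_deriv_jet: "(\<Sum>e\<in>UNIV. G j e * dH l e d) = - (\<Sum>q\<in>UNIV. DG l j q * H q d)"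
proof -
  have "(\<Sum>e\<in>UNIV. G j e * dH l e d)
      = - (\<Sum>p\<in>UNIV. \<Sum>e\<in>UNIV. G j e * H e p * (\<Sum>q\<in>UNIV. DG l p q * H q d))"
    unfolding ginv_deriv_jet_def by (subst sum.swap) (simp add: sum_distrib_left mult_ac sum_negf)
  also have "\<dots> = - (\<Sum>q\<in>UNIV. DG l j q * H q d)"
    by (simp add: inverse_right flip: sum_distrib_right)
  finally show ?thesis .
qed

lemma lower_christoffel_deriv_jet:
  "(\<Sum>e\<in>UNIV. G j e * d\<Gamma>\<^sub>2 l e b c) = d\<Gamma> l j b c - (\<Sum>q\<in>UNIV. DG l j q * \<Gamma>\<^sub>2 q b c)"
proof -
  have "(\<Sum>e\<in>UNIV. G j e * d\<Gamma>\<^sub>2 l e b c)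
      = (\<Sum>e\<in>UNIV. \<Sum>d\<in>UNIV. G j e * dH l e d * \<Gamma> d b c + G j e * H e d * d\<Gamma> l d b c)"
    unfolding christoffel_deriv_jet_def by (simp add: sum_distrib_left algebra_simps)
  also have "\<dots> = (\<Sum>d\<in>UNIV. \<Sum>e\<in>UNIV. G j e * dH l e d * \<Gamma> d b c + G j e * H e d * d\<Gamma> l d b c)"
    by (rule sum.swap)
  also have "\<dots> = (\<Sum>d\<in>UNIV. (\<Sum>e\<in>UNIV. G j e * dH l e d) * \<Gamma> d b c
      + (\<Sum>e\<in>UNIV. G j e * H e d) * d\<Gamma> l d b c)"
    by (simp add: sum.distrib sum_distrib_right)
  also have "\<dots> = d\<Gamma> l j b c - (\<Sum>d\<in>UNIV. \<Sum>q\<in>UNIV. DG l j q * (H q d * \<Gamma> d b c))"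
    by (simp add: lower_ginv_deriv_jet inverse_right sum_subtractf sum_distrib_right mult.assoc)
  also have "(\<Sum>d\<in>UNIV. \<Sum>q\<in>UNIV. DG l j q * (H q d * \<Gamma> d b c)) = (\<Sum>q\<in>UNIV. DG l j q * \<Gamma>\<^sub>2 q b c)"
    unfolding christoffel_jet_def by (subst sum.swap) (simp add: sum_distrib_left)
  finally show ?thesis .
qed

lemma lower_riem_up_jet: "(\<Sum>e\<in>UNIV. G j e * riem_up_jet H DG DDG e k l m) = R j k l m"
proof -
  have quadratic: "(\<Sum>e\<in>UNIV. G j e * (\<Sum>p\<in>UNIV. \<Gamma>\<^sub>2 e l p * \<Gamma>\<^sub>2 p m k))
      = (\<Sum>p\<in>UNIV. \<Gamma> j l p * \<Gamma>\<^sub>2 p m k)" for l m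
  proof -
    have "(\<Sum>e\<in>UNIV. G j e * (\<Sum>p\<in>UNIV. \<Gamma>\<^sub>2 e l p * \<Gamma>\<^sub>2 p m k))
        = (\<Sum>e\<in>UNIV. \<Sum>p\<in>UNIV. G j e * \<Gamma>\<^sub>2 e l p * \<Gamma>\<^sub>2 p m k)"
      by (simp add: sum_distrib_left mult_ac)
    also have "\<dots> = (\<Sum>p\<in>UNIV. (\<Sum>e\<in>UNIV. G j e * \<Gamma>\<^sub>2 e l p) * \<Gamma>\<^sub>2 p m k)"
      by (subst sum.swap) (simp add: sum_distrib_right)
    finally have "(\<Sum>e\<in>UNIV. G j e * (\<Sum>p\<in>UNIV. \<Gamma>\<^sub>2 e l p * \<Gamma>\<^sub>2 p m k))
        = (\<Sum>p\<in>UNIV. (\<Sum>e\<in>UNIV. G j e * \<Gamma>\<^sub>2 e l p) * \<Gamma>\<^sub>2 p m k)" .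
    then show ?thesis by (simp add: lower_christoffel_jet)
  qed
  have first_kind: "\<Gamma> j l p - DG l j p = - \<Gamma> p j l" for l p
    unfolding christoffel_first_def dmetric_sym[of p j l] dmetric_sym[of l p j] dmetric_sym[of j p l]
    by (simp add: field_simps)
  have "(\<Sum>e\<in>UNIV. G j e * riem_up_jet H DG DDG e k l m)
      = (\<Sum>e\<in>UNIV. G j e * d\<Gamma>\<^sub>2 l e m k) - (\<Sum>e\<in>UNIV. G j e * d\<Gamma>\<^sub>2 m e l k)
      + (\<Sum>e\<in>UNIV. G j e * (\<Sum>p\<in>UNIV. \<Gamma>\<^sub>2 e l p * \<Gamma>\<^sub>2 p m k))
      - (\<Sum>e\<in>UNIV. G j e * (\<Sum>p\<in>UNIV. \<Gamma>\<^sub>2 e m p * \<Gamma>\<^sub>2 p l k))"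
    unfolding riem_up_jet_def by (simp add: algebra_simps sum.distrib sum_subtractf)
  also have "\<dots> = d\<Gamma> l j m k - d\<Gamma> m j l k + (\<Sum>p\<in>UNIV. (\<Gamma> j l p - DG l j p) * \<Gamma>\<^sub>2 p m k)
      - (\<Sum>p\<in>UNIV. (\<Gamma> j m p - DG m j p) * \<Gamma>\<^sub>2 p l k)"
    unfolding lower_christoffel_deriv_jet quadratic by (simp add: algebra_simps sum.distrib sum_subtractf)
  also have "\<dots> = R j k l m"
    unfolding first_kind riem_jet_def christoffel_jet_def by (simp add: sum_distrib_left mult_ac sum_negf)
  finally show ?thesis .
qed

lemma christoffel_jet_metric_compatible:
  "(\<Sum>q\<in>UNIV. H q m * \<Gamma>\<^sub>2 j i q + H j q * \<Gamma>\<^sub>2 m i q) = - dH i j m"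
proof -
  have "(\<Sum>q\<in>UNIV. H q m * \<Gamma>\<^sub>2 j i q + H j q * \<Gamma>\<^sub>2 m i q)
      = (\<Sum>q\<in>UNIV. \<Sum>d\<in>UNIV. H j d * H q m * \<Gamma> d i q) + (\<Sum>q\<in>UNIV. \<Sum>d\<in>UNIV. H j q * H m d * \<Gamma> d i q)"
    unfolding christoffel_jet_def by (simp add: sum.distrib sum_distrib_left mult_ac)
  also have "(\<Sum>q\<in>UNIV. \<Sum>d\<in>UNIV. H j q * H m d * \<Gamma> d i q) = (\<Sum>q\<in>UNIV. \<Sum>d\<in>UNIV. H j d * H q m * \<Gamma> q i d)"
    by (subst sum.swap) (simp add: inverse_sym mult_ac)
  also have "(\<Sum>q\<in>UNIV. \<Sum>d\<in>UNIV. H j d * H q m * \<Gamma> d i q) + \<dots>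
      = (\<Sum>q\<in>UNIV. \<Sum>d\<in>UNIV. H j d * H q m * (\<Gamma> d i q + \<Gamma> q i d))"
    by (simp add: sum.distrib algebra_simps)
  also have "\<dots> = (\<Sum>q\<in>UNIV. \<Sum>d\<in>UNIV. H j d * DG i d q * H q m)"
    by (simp add: christoffel_first_add mult_ac)
  also have "\<dots> = - dH i j m" unfolding ginv_deriv_jet_def by (subst sum.swap) simp
  finally show ?thesis .
qed

lemma trace_free_cov_deriv_jet:
  fixes T dT :: "4 \<Rightarrow> 4 \<Rightarrow> 4 \<Rightarrow> 4 \<Rightarrow> real"
  assumes T: "trace_free H T"
    and dtrace: "(\<Sum>j\<in>UNIV. \<Sum>m\<in>UNIV. dH i j m * T j k l m + H j m * dT j k l m) = 0"
  shows "(\<Sum>j\<in>UNIV. \<Sum>m\<in>UNIV. H j m * (dT j k l m - (\<Sum>p\<in>UNIV. \<Gamma>\<^sub>2 p i j * T p k l m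
      + \<Gamma>\<^sub>2 p i k * T j p l m + \<Gamma>\<^sub>2 p i l * T j k p m + \<Gamma>\<^sub>2 p i m * T j k l p))) = 0"
proof -
  have slot2: "(\<Sum>j\<in>UNIV. \<Sum>m\<in>UNIV. H j m * (\<Sum>p\<in>UNIV. \<Gamma>\<^sub>2 p i k * T j p l m)) = 0"
    and slot3: "(\<Sum>j\<in>UNIV. \<Sum>m\<in>UNIV. H j m * (\<Sum>p\<in>UNIV. \<Gamma>\<^sub>2 p i l * T j k p m)) = 0"
    using T unfolding trace_free_def by (simp_all add: sum_contract_swap)
  have slot1: "(\<Sum>j\<in>UNIV. \<Sum>m\<in>UNIV. H j m * (\<Sum>p\<in>UNIV. \<Gamma>\<^sub>2 p i j * T p k l m))
      = (\<Sum>j\<in>UNIV. \<Sum>m\<in>UNIV. T j k l m * (\<Sum>q\<in>UNIV. H q m * \<Gamma>\<^sub>2 j i q))"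
    by (rule sum_contract_first_slot)
  have slot4: "(\<Sum>j\<in>UNIV. \<Sum>m\<in>UNIV. H j m * (\<Sum>p\<in>UNIV. \<Gamma>\<^sub>2 p i m * T j k l p))
      = (\<Sum>j\<in>UNIV. \<Sum>m\<in>UNIV. T j k l m * (\<Sum>q\<in>UNIV. H j q * \<Gamma>\<^sub>2 m i q))"
    by (rule sum_contract_last_slot)
  have "(\<Sum>j\<in>UNIV. \<Sum>m\<in>UNIV. H j m * (dT j k l m - (\<Sum>p\<in>UNIV. \<Gamma>\<^sub>2 p i j * T p k l m
      + \<Gamma>\<^sub>2 p i k * T j p l m + \<Gamma>\<^sub>2 p i l * T j k p m + \<Gamma>\<^sub>2 p i m * T j k l p)))
    = (\<Sum>j\<in>UNIV. \<Sum>m\<in>UNIV. H j m * dT j k l m)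
      - (\<Sum>j\<in>UNIV. \<Sum>m\<in>UNIV. H j m * (\<Sum>p\<in>UNIV. \<Gamma>\<^sub>2 p i j * T p k l m))
      - (\<Sum>j\<in>UNIV. \<Sum>m\<in>UNIV. H j m * (\<Sum>p\<in>UNIV. \<Gamma>\<^sub>2 p i k * T j p l m))
      - (\<Sum>j\<in>UNIV. \<Sum>m\<in>UNIV. H j m * (\<Sum>p\<in>UNIV. \<Gamma>\<^sub>2 p i l * T j k p m))
      - (\<Sum>j\<in>UNIV. \<Sum>m\<in>UNIV. H j m * (\<Sum>p\<in>UNIV. \<Gamma>\<^sub>2 p i m * T j k l p))"
    by (simp add: sum.distrib sum_subtractf algebra_simps)
  also have "\<dots> = (\<Sum>j\<in>UNIV. \<Sum>m\<in>UNIV. H j m * dT j k l m)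
      - (\<Sum>j\<in>UNIV. \<Sum>m\<in>UNIV. T j k l m * (\<Sum>q\<in>UNIV. H q m * \<Gamma>\<^sub>2 j i q + H j q * \<Gamma>\<^sub>2 m i q))"
    unfolding slot1 slot2 slot3 slot4 by (simp add: sum.distrib algebra_simps)
  also have "\<dots> = (\<Sum>j\<in>UNIV. \<Sum>m\<in>UNIV. dH i j m * T j k l m + H j m * dT j k l m)"
    unfolding christoffel_jet_metric_compatible by (simp add: sum.distrib sum_negf mult_ac)
  finally show ?thesis using dtrace by simp
qed

end

definition metric_form :: "('n::finite \<Rightarrow> 'n \<Rightarrow> real) \<Rightarrow> real^'n \<Rightarrow> real^'n \<Rightarrow> real" where
  "metric_form G u v = (\<Sum>i\<in>UNIV. \<Sum>j\<in>UNIV. u$i * G i j * v$j)"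

lemma metric_form_right: "metric_form G u v = (\<Sum>j\<in>UNIV. (\<Sum>i\<in>UNIV. u$i * G i j) * v$j)"
  unfolding metric_form_def by (subst sum.swap) (simp add: sum_distrib_right)

lemma metric_form_sym:
  assumes "\<And>a b. G a b = G b a"
  shows "metric_form G u v = metric_form G v u"
  unfolding metric_form_def by (subst sum.swap) (simp add: assms mult_ac)

lemma metric_form_add_right: "metric_form G u (v + w) = metric_form G u v + metric_form G u w"
  unfolding metric_form_right by (simp add: distrib_left sum.distrib)

lemma metric_form_diff_right: "metric_form G u (v - w) = metric_form G u v - metric_form G u w"
  unfolding metric_form_right by (simp add: right_diff_distrib sum_subtractf)

lemma metric_form_scaleR_right: "metric_form G u (c *\<^sub>R v) = c * metric_form G u v"
  unfolding metric_form_right by (simp add: sum_distrib_left mult_ac)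

lemma metric_form_sum_right:
  "finite S \<Longrightarrow> metric_form G u (\<Sum>s\<in>S. f s) = (\<Sum>s\<in>S. metric_form G u (f s))"
  by (induction S rule: finite_induct) (simp_all add: metric_form_add_right, simp add: metric_form_right)

lemma metric_form_axis_right: "metric_form G u (axis k 1) = (\<Sum>i\<in>UNIV. u$i * G i k)"
  unfolding metric_form_right by (simp add: axis_def if_distrib cong: if_cong)

context
  fixes G :: "'n::finite \<Rightarrow> 'n \<Rightarrow> real"
  assumes G: "\<And>a b. G a b = G b a"
begin

lemma metric_form_commute: "metric_form G u v = metric_form G v u"
  by (rule metric_form_sym) (rule G)

lemma metric_form_add_left: "metric_form G (v + w) u = metric_form G v u + metric_form G w u"
proof -
  have "metric_form G (v + w) u = metric_form G u v + metric_form G u w"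
    by (simp only: metric_form_commute[of "v + w" u] metric_form_add_right)
  then show ?thesis by (simp only: metric_form_commute[of u])
qed

lemma metric_form_nondegenerate:
  assumes H: "\<And>a b. (\<Sum>k\<in>UNIV. H a k * G k b) = (if a = b then 1 else 0)"
    and x: "\<And>k. metric_form G x (axis k 1) = 0"
  shows "x = 0"
proof -
  have "x$m = 0" for m
  proof -
    have "x$m = (\<Sum>i\<in>UNIV. (\<Sum>k\<in>UNIV. H m k * G k i) * x$i)" by (simp add: H)
    also have "\<dots> = (\<Sum>i\<in>UNIV. \<Sum>k\<in>UNIV. H m k * (G k i * x$i))"
      by (simp add: sum_distrib_right sum_distrib_left mult_ac)
    also have "\<dots> = (\<Sum>k\<in>UNIV. H m k * (\<Sum>i\<in>UNIV. x$i * G i k))"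
      by (subst sum.swap) (simp add: sum_distrib_left mult_ac G)
    also have "\<dots> = 0" using x by (simp add: metric_form_axis_right)
    finally show ?thesis .
  qed
  then show ?thesis by (simp add: vec_eq_iff)
qed

lemma metric_form_orthogonal_exists:
  assumes "finite S" "card S < CARD('n)"
  shows "\<exists>x. x \<noteq> 0 \<and> (\<forall>s\<in>S. metric_form G s x = 0)"
proof -
  define lower where "lower s = (\<chi> i. \<Sum>j\<in>UNIV. G i j * s$j)" for s :: "real^'n"
  have "dim (lower ` S) \<le> card (lower ` S)" using assms(1) by (simp add: dim_le_card')
  also have "\<dots> \<le> card S" using assms(1) by (rule card_image_le)
  finally have "dim (lower ` S) < DIM(real^'n)" using assms(2) by simp
  then obtain x :: "real^'n" where "x \<noteq> 0" and "\<And>y. y \<in> span (lower ` S) \<Longrightarrow> orthogonal x y"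
    using orthogonal_to_subspace_exists by blast
  moreover have "metric_form G s x = 0" if "orthogonal x (lower s)" for s
    using that metric_form_commute[of x s]
    unfolding orthogonal_def inner_vec_def lower_def metric_form_def by (simp add: sum_distrib_left mult_ac)
  ultimately show ?thesis by (meson image_eqI span_base)
qed

lemma metric_form_isotropic_complement_radical:
  assumes S: "finite S" and nn: "\<And>s. s \<in> S \<Longrightarrow> metric_form G s s \<noteq> 0"
    and orth: "\<And>s t. s \<in> S \<Longrightarrow> t \<in> S \<Longrightarrow> s \<noteq> t \<Longrightarrow> metric_form G s t = 0"
    and iso: "\<And>y. \<forall>s\<in>S. metric_form G s y = 0 \<Longrightarrow> metric_form G y y = 0"
    and x: "\<forall>s\<in>S. metric_form G s x = 0"
  shows "metric_form G x z = 0"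
proof -
  define proj where "proj = (\<Sum>s\<in>S. (metric_form G s z / metric_form G s s) *\<^sub>R s)"
  have "metric_form G t (z - proj) = 0" if "t \<in> S" for t
  proof -
    have "metric_form G t proj = (\<Sum>s\<in>S. metric_form G s z / metric_form G s s * metric_form G t s)"
      by (simp add: proj_def metric_form_sum_right[OF S] metric_form_scaleR_right)
    also have "\<dots> = (\<Sum>s\<in>S. if s = t then metric_form G t z else 0)"
      by (rule sum.cong) (auto simp: nn orth that)
    finally show ?thesis using S that by (simp add: metric_form_diff_right)
  qed
  then have "\<forall>s\<in>S. metric_form G s (z - proj) = 0" "\<forall>s\<in>S. metric_form G s (x + (z - proj)) = 0"
    using x by (simp_all add: metric_form_add_right)
  then have "metric_form G x x + 2 * metric_form G x (z - proj) + metric_form G (z - proj) (z - proj) = 0"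
    using iso[of "x + (z - proj)"] metric_form_commute[of "z - proj" x]
    by (simp add: metric_form_add_left metric_form_add_right)
  then have "metric_form G x (z - proj) = 0"
    using iso x \<open>\<forall>s\<in>S. metric_form G s (z - proj) = 0\<close> by simp
  moreover have "metric_form G x proj = 0"
  proof -
    have "\<forall>s\<in>S. metric_form G x s = 0" using x by (simp add: metric_form_commute[of x])
    with S show ?thesis by (simp add: proj_def metric_form_sum_right metric_form_scaleR_right)
  qed
  ultimately show ?thesis by (simp add: metric_form_diff_right)
qed

lemma metric_form_extend_orthogonal:
  assumes H: "\<And>a b. (\<Sum>k\<in>UNIV. H a k * G k b) = (if a = b then 1 else 0)"
    and S: "finite S" "card S < CARD('n)"
    and nn: "\<And>s. s \<in> S \<Longrightarrow> metric_form G s s \<noteq> 0"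
    and orth: "\<And>s t. s \<in> S \<Longrightarrow> t \<in> S \<Longrightarrow> s \<noteq> t \<Longrightarrow> metric_form G s t = 0"
  shows "\<exists>x. metric_form G x x \<noteq> 0 \<and> (\<forall>s\<in>S. metric_form G s x = 0)"
proof (rule ccontr)
  assume "\<not> ?thesis"
  then have iso: "\<And>y. \<forall>s\<in>S. metric_form G s y = 0 \<Longrightarrow> metric_form G y y = 0" by blast
  obtain x where "x \<noteq> 0" "\<forall>s\<in>S. metric_form G s x = 0"
    using metric_form_orthogonal_exists[OF S] by blast
  moreover from this have "x = 0"
    by (intro metric_form_nondegenerate[OF H] metric_form_isotropic_complement_radical[OF S(1) nn orth iso])
  ultimately show False by simp
qed

end

lemma orthogonal_frame_through:
  fixes G H :: "4 \<Rightarrow> 4 \<Rightarrow> real" and a :: "real^4"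
  assumes G: "\<And>a b. G a b = G b a"
    and H: "\<And>a b. (\<Sum>k\<in>UNIV. H a k * G k b) = (if a = b then 1 else 0)"
    and a: "metric_form G a a \<noteq> 0"
  obtains vs :: "4 \<Rightarrow> real^4" where "vs 4 = a" "\<And>p. metric_form G (vs p) (vs p) \<noteq> 0"
    "\<And>p q. p \<noteq> q \<Longrightarrow> metric_form G (vs p) (vs q) = 0"
proof -
  note extend = metric_form_extend_orthogonal[OF G H]
  have comm: "metric_form G u v = metric_form G v u" for u v by (rule metric_form_sym[OF G])
  obtain v1 where v1: "metric_form G v1 v1 \<noteq> 0" "metric_form G a v1 = 0"
    using extend[of "{a}"] a by auto
  obtain v2 where v2: "metric_form G v2 v2 \<noteq> 0" "metric_form G a v2 = 0" "metric_form G v1 v2 = 0"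
  proof -
    have "\<exists>x. metric_form G x x \<noteq> 0 \<and> (\<forall>s\<in>{a, v1}. metric_form G s x = 0)"
    proof (rule extend)
      show "metric_form G s t = 0" if "s \<in> {a, v1}" "t \<in> {a, v1}" "s \<noteq> t" for s t
        using that v1 comm[of v1 a] by auto
    qed (use a v1 in \<open>auto simp: card_insert_if\<close>)
    then show thesis using that by auto
  qed
  obtain v3 where v3: "metric_form G v3 v3 \<noteq> 0" "metric_form G a v3 = 0" "metric_form G v1 v3 = 0"
      "metric_form G v2 v3 = 0"
  proof -
    have "\<exists>x. metric_form G x x \<noteq> 0 \<and> (\<forall>s\<in>{a, v1, v2}. metric_form G s x = 0)"
    proof (rule extend)
      show "metric_form G s t = 0" if "s \<in> {a, v1, v2}" "t \<in> {a, v1, v2}" "s \<noteq> t" for s t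
        using that v1 v2 comm[of v1 a] comm[of v2 a] comm[of v2 v1] by auto
    qed (use a v1 v2 in \<open>auto simp: card_insert_if\<close>)
    then show thesis using that by auto
  qed
  define vs where "vs p = (if p = 1 then v1 else if p = 2 then v2 else if p = 3 then v3 else a)" for p :: 4
  show thesis
  proof (rule that[of vs])
    show "metric_form G (vs p) (vs q) = 0" if "p \<noteq> q" for p q
      using that exhaust_4[of p] exhaust_4[of q] v1 v2 v3 comm[of v1 a] comm[of v2 a] comm[of v3 a]
        comm[of v2 v1] comm[of v3 v1] comm[of v3 v2]
      unfolding vs_def by auto
    show "metric_form G (vs p) (vs p) \<noteq> 0" for p
      using exhaust_4[of p] a v1 v2 v3 unfolding vs_def by auto
  qed (simp add: vs_def)
qed

lemma orthogonal_frame_gram: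
  fixes G :: "'n::finite \<Rightarrow> 'n \<Rightarrow> real" and vs :: "'n \<Rightarrow> real^'n"
  assumes orth: "\<And>p q. p \<noteq> q \<Longrightarrow> metric_form G (vs p) (vs q) = 0"
  shows "transpose (\<chi> j p. vs p $ j) ** (\<chi> i j. G i j) ** (\<chi> j p. vs p $ j)
    = (\<chi> p q. if p = q then metric_form G (vs p) (vs p) else 0)"
  using orth by (auto simp: vec_eq_iff metric_form_right matrix_matrix_mult_def transpose_def)

lemma orthogonal_frame_invertible:
  fixes G :: "'n::finite \<Rightarrow> 'n \<Rightarrow> real" and vs :: "'n \<Rightarrow> real^'n"
  assumes nn: "\<And>p. metric_form G (vs p) (vs p) \<noteq> 0"
    and orth: "\<And>p q. p \<noteq> q \<Longrightarrow> metric_form G (vs p) (vs q) = 0"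
  shows "invertible (\<chi> j p. vs p $ j)"
proof -
  have "det (\<chi> j p. vs p $ j) * det (\<chi> i j. G i j) * det (\<chi> j p. vs p $ j)
      = (\<Prod>p\<in>UNIV. metric_form G (vs p) (vs p))"
    using arg_cong[where f=det, OF orthogonal_frame_gram[of G vs, OF orth]] by (simp add: det_mul det_diagonal)
  moreover have "(\<Prod>p\<in>UNIV. metric_form G (vs p) (vs p)) \<noteq> 0" using nn by simp
  ultimately show ?thesis by (auto simp: invertible_det_nz)
qed

lemma inverse_metric_frame_expansion:
  fixes G H :: "'n::finite \<Rightarrow> 'n \<Rightarrow> real" and vs :: "'n \<Rightarrow> real^'n"
  assumes GH: "\<And>a b. (\<Sum>k\<in>UNIV. G a k * H k b) = (if a = b then 1 else 0)"
    and nn: "\<And>p. metric_form G (vs p) (vs p) \<noteq> 0"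
    and orth: "\<And>p q. p \<noteq> q \<Longrightarrow> metric_form G (vs p) (vs q) = 0"
  shows "H j m = (\<Sum>p\<in>UNIV. vs p $ j * vs p $ m / metric_form G (vs p) (vs p))"
proof -
  define V :: "real^'n^'n" where "V = (\<chi> j p. vs p $ j)"
  define Gm :: "real^'n^'n" where "Gm = (\<chi> i j. G i j)"
  define Di :: "real^'n^'n" where "Di = (\<chi> p q. if p = q then 1 / metric_form G (vs p) (vs p) else 0)"
  define M where "M = V ** Di ** transpose V"
  obtain U where VU: "V ** U = mat 1"
    using orthogonal_frame_invertible[of G vs] nn orth unfolding V_def invertible_def by blast
  have gram: "transpose V ** Gm ** V = (\<chi> p q. if p = q then metric_form G (vs p) (vs p) else 0)"
    unfolding V_def Gm_def by (rule orthogonal_frame_gram) (fact orth)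
  have "(\<Sum>r\<in>UNIV. (if p = r then 1 / metric_form G (vs p) (vs p) else 0)
      * (if r = q then metric_form G (vs r) (vs r) else 0)) = (if p = q then 1 else 0)" for p q
  proof -
    have "(\<Sum>r\<in>UNIV. (if p = r then 1 / metric_form G (vs p) (vs p) else 0)
        * (if r = q then metric_form G (vs r) (vs r) else 0))
        = (\<Sum>r\<in>UNIV. if r = p then (if p = q then 1 else 0) else 0)"
      by (rule sum.cong) (auto simp: nn)
    then show ?thesis by simp
  qed
  then have "Di ** (transpose V ** Gm ** V) = mat 1"
    unfolding gram Di_def by (simp add: vec_eq_iff matrix_matrix_mult_def mat_def)
  moreover have "M ** Gm ** V = V ** (Di ** (transpose V ** Gm ** V))"
    unfolding M_def by (simp add: matrix_mul_assoc)
  ultimately have "M ** Gm ** V = V" by simp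
  have "M ** Gm = M ** Gm ** (V ** U)" by (simp add: VU)
  also have "\<dots> = (M ** Gm ** V) ** U" by (simp only: matrix_mul_assoc)
  finally have MG: "M ** Gm = mat 1" using \<open>M ** Gm ** V = V\<close> VU by simp
  have "Gm ** (\<chi> i j. H i j) = mat 1"
    unfolding Gm_def by (simp add: vec_eq_iff matrix_matrix_mult_def mat_def GH)
  then have "(\<chi> i j. H i j) = M"
    using MG by (metis matrix_mul_assoc matrix_mul_lid matrix_mul_rid)
  then have "H j m = M $ j $ m" by (simp add: vec_eq_iff)
  also have "\<dots> = (\<Sum>p\<in>UNIV. vs p $ j * vs p $ m / metric_form G (vs p) (vs p))"
    unfolding M_def V_def Di_def
    by (simp add: matrix_matrix_mult_def transpose_def if_distrib cong: if_cong)
  finally show ?thesis .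
qed

lemma sum_UNIV_4tuple:
  fixes f :: "'a::finite \<Rightarrow> 'b::finite \<Rightarrow> 'c::finite \<Rightarrow> 'd::finite \<Rightarrow> real"
  shows "(\<Sum>(j, k, l, m)\<in>UNIV. f j k l m) = (\<Sum>j\<in>UNIV. \<Sum>k\<in>UNIV. \<Sum>l\<in>UNIV. \<Sum>m\<in>UNIV. f j k l m)"
  by (simp only: sum.cartesian_product UNIV_Times_UNIV split_def)

definition frame_components ::
    "('n::finite \<Rightarrow> 'n \<Rightarrow> 'n \<Rightarrow> 'n \<Rightarrow> real) \<Rightarrow> ('n \<Rightarrow> 'n \<Rightarrow> real) \<Rightarrow> 'n \<Rightarrow> 'n \<Rightarrow> 'n \<Rightarrow> 'n \<Rightarrow> real" where
  "frame_components T V p q r s = (\<Sum>(j, k, l, m)\<in>UNIV. T j k l m * V j p * V k q * V l r * V m s)"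

lemma frame_components_nested: "frame_components T V p q r s
    = (\<Sum>m\<in>UNIV. (\<Sum>l\<in>UNIV. (\<Sum>k\<in>UNIV. (\<Sum>j\<in>UNIV. T j k l m * V j p) * V k q) * V l r) * V m s)"
proof -
  have "(\<Sum>m\<in>UNIV. (\<Sum>l\<in>UNIV. (\<Sum>k\<in>UNIV. (\<Sum>j\<in>UNIV. T j k l m * V j p) * V k q) * V l r) * V m s)
      = (\<Sum>m\<in>UNIV. \<Sum>l\<in>UNIV. \<Sum>k\<in>UNIV. \<Sum>j\<in>UNIV. T j k l m * V j p * V k q * V l r * V m s)"
    by (simp add: sum_distrib_right)
  also have "\<dots> = (\<Sum>(m, l, k, j)\<in>UNIV. T j k l m * V j p * V k q * V l r * V m s)"
    by (simp only: sum.cartesian_product UNIV_Times_UNIV split_def)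
  also have "\<dots> = frame_components T V p q r s"
    unfolding frame_components_def
    by (rule sum.reindex_bij_witness[where i="\<lambda>(j, k, l, m). (m, l, k, j)" and j="\<lambda>(m, l, k, j). (j, k, l, m)"])
      auto
  finally show ?thesis ..
qed

lemma frame_components_antisym12:
  assumes "\<And>j k l m. T j k l m = - T k j l m"
  shows "frame_components T V p q r s = - frame_components T V q p r s"
proof -
  have "frame_components T V q p r s = (\<Sum>(j, k, l, m)\<in>UNIV. T k j l m * V k q * V j p * V l r * V m s)"
    unfolding frame_components_def
    by (rule sum.reindex_bij_witness[where i="\<lambda>(j, k, l, m). (k, j, l, m)" and j="\<lambda>(j, k, l, m). (k, j, l, m)"])
      auto
  also have "\<dots> = (\<Sum>(j, k, l, m)\<in>UNIV. - (T j k l m * V j p * V k q * V l r * V m s))"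
  proof -
    have pw: "T k j l m * V k q * V j p * V l r * V m s = - (T j k l m * V j p * V k q * V l r * V m s)"
      for j k l m using assms[of k j l m] by (simp add: mult_ac)
    show ?thesis by (rule sum.cong[OF refl]) (simp add: pw split_paired_all)
  qed
  finally show ?thesis unfolding frame_components_def by (simp add: sum_negf case_prod_beta)
qed

lemma frame_components_antisym34:
  assumes "\<And>j k l m. T j k l m = - T j k m l"
  shows "frame_components T V p q r s = - frame_components T V p q s r"
proof -
  have "frame_components T V p q s r = (\<Sum>(j, k, l, m)\<in>UNIV. T j k m l * V j p * V k q * V m s * V l r)"
    unfolding frame_components_def
    by (rule sum.reindex_bij_witness[where i="\<lambda>(j, k, l, m). (j, k, m, l)" and j="\<lambda>(j, k, l, m). (j, k, m, l)"])
      auto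
  also have "\<dots> = (\<Sum>(j, k, l, m)\<in>UNIV. - (T j k l m * V j p * V k q * V l r * V m s))"
  proof -
    have pw: "T j k m l * V j p * V k q * V m s * V l r = - (T j k l m * V j p * V k q * V l r * V m s)"
      for j k l m using assms[of j k m l] by (simp add: mult_ac)
    show ?thesis by (rule sum.cong[OF refl]) (simp add: pw split_paired_all)
  qed
  finally show ?thesis unfolding frame_components_def by (simp add: sum_negf case_prod_beta)
qed

lemma frame_components_pair_sym:
  assumes "\<And>j k l m. T j k l m = T l m j k"
  shows "frame_components T V p q r s = frame_components T V r s p q"
proof -
  have "frame_components T V r s p q = (\<Sum>(j, k, l, m)\<in>UNIV. T l m j k * V l r * V m s * V j p * V k q)"
    unfolding frame_components_def
    by (rule sum.reindex_bij_witness[where i="\<lambda>(j, k, l, m). (l, m, j, k)" and j="\<lambda>(j, k, l, m). (l, m, j, k)"])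
      auto
  also have "\<dots> = frame_components T V p q r s"
  proof -
    have pw: "T l m j k * V l r * V m s * V j p * V k q = T j k l m * V j p * V k q * V l r * V m s"
      for j k l m using assms[of l m j k] by (simp add: mult_ac)
    show ?thesis unfolding frame_components_def
      by (rule sum.cong[OF refl]) (simp add: pw split_paired_all)
  qed
  finally show ?thesis ..
qed

lemma frame_components_last_zero:
  assumes "\<And>j k l. (\<Sum>m\<in>UNIV. T j k l m * V m s) = 0"
  shows "frame_components T V p q r s = 0"
proof -
  have "(\<Sum>m\<in>UNIV. T j k l m * V j p * V k q * V l r * V m s)
      = V j p * V k q * V l r * (\<Sum>m\<in>UNIV. T j k l m * V m s)" for j k l
    by (simp add: sum_distrib_left mult_ac)
  then show ?thesis by (simp add: frame_components_def sum_UNIV_4tuple assms)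
qed

lemma frame_components_trace:
  assumes H: "\<And>j m. H j m = (\<Sum>p\<in>UNIV. V j p * V m p / e p)"
  shows "(\<Sum>p\<in>UNIV. frame_components T V p q r p / e p)
    = (\<Sum>k\<in>UNIV. \<Sum>l\<in>UNIV. V k q * V l r * (\<Sum>j\<in>UNIV. \<Sum>m\<in>UNIV. H j m * T j k l m))"
proof -
  have "(\<Sum>p\<in>UNIV. frame_components T V p q r p / e p)
      = (\<Sum>p\<in>UNIV. \<Sum>(j, k, l, m)\<in>UNIV. T j k l m * V j p * V k q * V l r * V m p / e p)"
    unfolding frame_components_def by (simp add: sum_divide_distrib case_prod_beta)
  also have "\<dots> = (\<Sum>(j, k, l, m)\<in>UNIV. \<Sum>p\<in>UNIV. T j k l m * V j p * V k q * V l r * V m p / e p)"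
    unfolding split_def by (rule sum.swap)
  also have "\<dots> = (\<Sum>(j, k, l, m)\<in>UNIV. V k q * V l r * (H j m * T j k l m))"
    by (intro sum.cong refl) (auto simp: H sum_distrib_left sum_distrib_right mult_ac)
  also have "\<dots> = (\<Sum>(k, l, j, m)\<in>UNIV. V k q * V l r * (H j m * T j k l m))"
    by (rule sum.reindex_bij_witness[where i="\<lambda>(k, l, j, m). (j, k, l, m)" and j="\<lambda>(j, k, l, m). (k, l, j, m)"])
      auto
  also have "\<dots> = (\<Sum>k\<in>UNIV. \<Sum>l\<in>UNIV. V k q * V l r * (\<Sum>j\<in>UNIV. \<Sum>m\<in>UNIV. H j m * T j k l m))"
    by (simp add: sum_UNIV_4tuple sum_distrib_left)
  finally show ?thesis .
qed

lemma frame_coefficients_zero: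
  fixes V U :: "'n::finite \<Rightarrow> 'n \<Rightarrow> real"
  assumes VU: "\<And>j j'. (\<Sum>p\<in>UNIV. V j p * U p j') = (if j = j' then 1 else 0)"
    and X: "\<And>p. (\<Sum>j\<in>UNIV. X j * V j p) = 0"
  shows "X j' = 0"
proof -
  have "X j' = (\<Sum>j\<in>UNIV. (\<Sum>p\<in>UNIV. V j p * U p j') * X j)" by (simp add: VU)
  also have "\<dots> = (\<Sum>j\<in>UNIV. \<Sum>p\<in>UNIV. U p j' * (X j * V j p))"
    by (simp add: sum_distrib_left sum_distrib_right mult_ac)
  also have "\<dots> = (\<Sum>p\<in>UNIV. U p j' * (\<Sum>j\<in>UNIV. X j * V j p))"
    by (subst sum.swap) (simp add: sum_distrib_left)
  also have "\<dots> = 0" by (simp add: X)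
  finally show ?thesis .
qed

lemma frame_components_zero:
  assumes VU: "\<And>j j'. (\<Sum>p\<in>UNIV. V j p * U p j') = (if j = j' then 1 else 0)"
    and T: "\<And>p q r s. frame_components T V p q r s = 0"
  shows "T j k l m = 0"
proof -
  have "(\<Sum>l\<in>UNIV. (\<Sum>k\<in>UNIV. (\<Sum>j\<in>UNIV. T j k l m * V j p) * V k q) * V l r) = 0" for p q r m
    by (rule frame_coefficients_zero[OF VU]) (use T in \<open>simp add: frame_components_nested\<close>)
  then have "(\<Sum>k\<in>UNIV. (\<Sum>j\<in>UNIV. T j k l m * V j p) * V k q) = 0" for p q l m
    by (rule frame_coefficients_zero[OF VU])
  then have "(\<Sum>j\<in>UNIV. T j k l m * V j p) = 0" for p k l m
    by (rule frame_coefficients_zero[OF VU])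
  then show ?thesis by (rule frame_coefficients_zero[OF VU])
qed

lemma curvature_symmetry_orbit_zero:
  fixes X :: "'a \<Rightarrow> 'a \<Rightarrow> 'a \<Rightarrow> 'a \<Rightarrow> real"
  assumes a12: "\<And>j k l m. X j k l m = - X k j l m"
    and a34: "\<And>j k l m. X j k l m = - X j k m l"
    and pair: "\<And>j k l m. X j k l m = X l m j k"
    and "X a b c d = 0"
  shows "X a b c d = 0 \<and> X b a c d = 0 \<and> X a b d c = 0 \<and> X b a d c = 0
    \<and> X c d a b = 0 \<and> X d c a b = 0 \<and> X c d b a = 0 \<and> X d c b a = 0"
  using assms(4) a12[of a b c d] a34[of a b c d] a34[of b a c d] pair[of a b c d] a12[of c d a b]
    a34[of c d a b] a34[of d c a b]
  by simp

lemma orthogonal_frame_components_zero: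
  fixes X :: "4 \<Rightarrow> 4 \<Rightarrow> 4 \<Rightarrow> 4 \<Rightarrow> real" and e :: "4 \<Rightarrow> real"
  assumes a12: "\<And>j k l m. X j k l m = - X k j l m"
    and a34: "\<And>j k l m. X j k l m = - X j k m l"
    and pair: "\<And>j k l m. X j k l m = X l m j k"
    and last: "\<And>p q r. X p q r 4 = 0"
    and e: "\<And>p. e p \<noteq> 0"
    and trace: "\<And>q r. (\<Sum>p\<in>UNIV. X p q r p / e p) = 0"
  shows "X p q r s = 0"
proof -
  have d12: "X j j l m = 0" and d34: "X j k l l = 0" for j k l m
    using a12[of j j l m] a34[of j k l l] by simp_all
  note orbit = curvature_symmetry_orbit_zero[where X=X, OF a12 a34 pair]
  have last': "X 4 q r s = 0" "X q 4 r s = 0" "X q r 4 s = 0" for q r s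
    using orbit[OF last[of r s q]] orbit[OF last[of q r s]] by auto
  have trace3: "X 1 q r 1 / e 1 + X 2 q r 2 / e 2 + X 3 q r 3 / e 3 = 0" for q r
    using trace[of q r] last'(1)[of q r 4] by (simp add: sum_4)
  \<comment> \<open>the diagonal traces form a nondegenerate linear system for the three sectional components\<close>
  define u where "u = X 1 2 1 2"
  define v where "v = X 1 3 1 3"
  define w where "w = X 2 3 2 3"
  have flip: "X 2 1 1 2 = - u" "X 3 1 1 3 = - v" "X 1 2 2 1 = - u" "X 3 2 2 3 = - w" "X 1 3 3 1 = - v"
    "X 2 3 3 2 = - w"
    using a12[of 2 1 1 2] a12[of 3 1 1 3] a34[of 1 2 2 1] a12[of 3 2 2 3] a34[of 1 3 3 1] a34[of 2 3 3 2]
    unfolding u_def v_def w_def by simp_all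
  have e1: "u / e 2 + v / e 3 = 0" using trace3[of 1 1] d12[of 1] flip by simp
  have e2: "u / e 1 + w / e 3 = 0" using trace3[of 2 2] d12[of 2] flip by simp
  have e3: "v / e 1 + w / e 2 = 0" using trace3[of 3 3] d12[of 3] flip by simp
  have "2 * u * (1 / e 1) * (1 / e 2)
      = (u / e 2 + v / e 3) * (1 / e 1) + (u / e 1 + w / e 3) * (1 / e 2) - (v / e 1 + w / e 2) * (1 / e 3)"
    using e[of 1] e[of 2] e[of 3] by (simp add: field_simps)
  then have u0: "u = 0" using e1 e2 e3 e by simp
  then have v0: "v = 0" using e1 e by simp
  have w0: "w = 0" using e2 u0 e by simp
  have o1: "X 3 1 2 3 = 0" using trace3[of 1 2] d12[of 1 2 1] d34[of 2 1 2] e[of 3] by simp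
  have o2: "X 2 1 3 2 = 0" using trace3[of 1 3] d12[of 1 3 1] d34[of 3 1 3] e[of 2] by simp
  have o3: "X 1 2 3 1 = 0" using trace3[of 2 3] d12[of 2 3 2] d34[of 3 2 3] e[of 1] by simp
  note zero = orbit[OF u0[unfolded u_def]] orbit[OF v0[unfolded v_def]] orbit[OF w0[unfolded w_def]]
    orbit[OF o1] orbit[OF o2] orbit[OF o3] d12 d34 last' last
  have "\<forall>p q r s. X p q r s = 0" unfolding forall_4 using zero by simp
  then show ?thesis by blast
qed

lemma trace_free_curvature_annihilated_by_nonnull:
  fixes G H :: "4 \<Rightarrow> 4 \<Rightarrow> real" and T :: "4 \<Rightarrow> 4 \<Rightarrow> 4 \<Rightarrow> 4 \<Rightarrow> real" and a :: "real^4"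
  assumes G: "\<And>a b. G a b = G b a"
    and HG: "\<And>a b. (\<Sum>k\<in>UNIV. H a k * G k b) = (if a = b then 1 else 0)"
    and GH: "\<And>a b. (\<Sum>k\<in>UNIV. G a k * H k b) = (if a = b then 1 else 0)"
    and T: "algebraic_curvature T" "trace_free H T"
    and Ta: "\<And>j k l. (\<Sum>m\<in>UNIV. T j k l m * a$m) = 0"
    and a: "metric_form G a a \<noteq> 0"
  shows "T j k l m = 0"
proof -
  obtain vs :: "4 \<Rightarrow> real^4" where vs: "vs 4 = a" "\<And>p. metric_form G (vs p) (vs p) \<noteq> 0"
    "\<And>p q. p \<noteq> q \<Longrightarrow> metric_form G (vs p) (vs q) = 0"
    using orthogonal_frame_through[OF G HG a] by blast
  define V where "V j p = vs p $ j" for j p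
  define e where "e p = metric_form G (vs p) (vs p)" for p
  obtain U :: "real^4^4" where "(\<chi> j p. vs p $ j) ** U = mat 1"
    using orthogonal_frame_invertible[of G vs] vs(2,3) unfolding invertible_def by blast
  then have VU: "(\<Sum>p\<in>UNIV. V j p * U $ p $ j') = (if j = j' then 1 else 0)" for j j'
    unfolding V_def by (simp add: vec_eq_iff matrix_matrix_mult_def mat_def)
  have H: "H j m = (\<Sum>p\<in>UNIV. V j p * V m p / e p)" for j m
    unfolding V_def e_def by (rule inverse_metric_frame_expansion[OF GH]) (fact vs(2), fact vs(3))
  have "frame_components T V p q r s = 0" for p q r s
  proof (rule orthogonal_frame_components_zero)
    show "frame_components T V p q r 4 = 0" for p q r
      by (rule frame_components_last_zero) (simp add: V_def vs(1) Ta)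
    show "(\<Sum>p\<in>UNIV. frame_components T V p q r p / e p) = 0" for q r
      using T(2) unfolding frame_components_trace[OF H] trace_free_def by simp
    show "frame_components T V p q r s = - frame_components T V q p r s" for p q r s
      by (intro frame_components_antisym12 algebraic_curvature_antisym12[OF T(1)])
    show "frame_components T V p q r s = - frame_components T V p q s r" for p q r s
      by (intro frame_components_antisym34 algebraic_curvature_antisym34[OF T(1)])
    show "frame_components T V p q r s = frame_components T V r s p q" for p q r s
      by (intro frame_components_pair_sym algebraic_curvature_pair_sym[OF T(1)])
    show "e p \<noteq> 0" for p unfolding e_def by (fact vs(2))
  qed
  then show ?thesis by (rule frame_components_zero[OF VU])
qed

lemma differentiable_prod:
  fixes f :: "'i \<Rightarrow> 'a::real_normed_vector \<Rightarrow> 'b::real_normed_field"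
  assumes "\<And>i. i \<in> I \<Longrightarrow> f i differentiable (at x)"
  shows "(\<lambda>x. \<Prod>i\<in>I. f i x) differentiable (at x)"
proof -
  have "(f i has_derivative frechet_derivative (f i) (at x)) (at x)" if "i \<in> I" for i
    using assms[OF that] by (simp add: frechet_derivative_works)
  then show ?thesis by (rule differentiableI[OF has_derivative_prod])
qed

lemma differentiable_det:
  fixes F :: "'a::real_normed_vector \<Rightarrow> real^'n^'n"
  assumes "\<And>i j. (\<lambda>z. F z $ i $ j) differentiable (at y)"
  shows "(\<lambda>z. det (F z)) differentiable (at y)"
  unfolding det_def
proof (rule differentiable_sum)
  show "finite {p. p permutes (UNIV :: 'n set)}" by (simp add: finite_permutations)
qed (intro ballI differentiable_mult differentiable_const differentiable_prod assms)

lemma matrix_inv_works: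
  fixes A :: "real^'n^'n"
  assumes "det A \<noteq> 0"
  shows "matrix_inv A ** A = mat 1" "A ** matrix_inv A = mat 1"
proof -
  have "\<exists>A'. A ** A' = mat 1 \<and> A' ** A = mat 1"
    using assms invertible_det_nz unfolding invertible_def by blast
  then have "A ** matrix_inv A = mat 1 \<and> matrix_inv A ** A = mat 1"
    unfolding matrix_inv_def by (rule someI_ex)
  then show "matrix_inv A ** A = mat 1" "A ** matrix_inv A = mat 1" by auto
qed

lemma matrix_inv_cramer:
  fixes A :: "real^'n^'n"
  assumes "det A \<noteq> 0"
  shows "matrix_inv A $ i $ k = det (\<chi> r c. if c = i then axis k 1 $ r else A $ r $ c) / det A"
proof -
  have "A *v (matrix_inv A *v axis k 1) = axis k 1"
    by (simp add: matrix_vector_mul_assoc matrix_inv_works(2)[OF assms])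
  then have "matrix_inv A *v axis k 1 = (\<chi> k'. det (\<chi> r c. if c = k' then axis k 1 $ r else A $ r $ c) / det A)"
    using cramer[OF assms] by blast
  moreover have "(matrix_inv A *v axis k 1) $ i = matrix_inv A $ i $ k"
    by (simp add: matrix_vector_mult_basis column_def)
  ultimately show ?thesis by simp
qed

lemma matrix_inv_transpose_sym:
  fixes A :: "real^'n^'n"
  assumes "det A \<noteq> 0" "transpose A = A"
  shows "matrix_inv A $ a $ b = matrix_inv A $ b $ a"
proof -
  let ?M = "matrix_inv A"
  have "transpose ?M ** A = transpose (A ** ?M)"
    by (subst (2) assms(2)[symmetric]) (rule matrix_transpose_mul[symmetric])
  then have left: "transpose ?M ** A = mat 1" by (simp add: matrix_inv_works(2)[OF assms(1)])
  have "?M = (transpose ?M ** A) ** ?M" by (simp add: left)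
  also have "\<dots> = transpose ?M" by (simp add: matrix_mul_assoc[symmetric] matrix_inv_works(2)[OF assms(1)])
  finally have "?M $ a $ b = transpose ?M $ a $ b" by simp
  then show ?thesis by (simp add: transpose_def)
qed

lemma differentiable_matrix_inv_entry:
  fixes F :: "real^4 \<Rightarrow> real^'n^'n"
  assumes U: "open U" "y \<in> U" and det: "\<And>z. z \<in> U \<Longrightarrow> det (F z) \<noteq> 0"
    and F: "\<And>i j. (\<lambda>z. F z $ i $ j) differentiable (at y)"
  shows "(\<lambda>z. matrix_inv (F z) $ i $ k) differentiable (at y)"
proof -
  have "(\<lambda>z. if c = i then axis k 1 $ r else F z $ r $ c) differentiable (at y)" for r c
    by (cases "c = i") (simp_all add: F)
  then have "(\<lambda>z. det (\<chi> r c. if c = i then axis k 1 $ r else F z $ r $ c) / det (F z)) differentiable (at y)"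
    using det[OF U(2)] by (intro differentiable_divide differentiable_det) (auto simp: F)
  then show ?thesis by (rule differentiable_cong_open[OF U, rotated]) (simp add: matrix_inv_cramer det)
qed

lemma det_minkowski: "det minkowski \<noteq> 0"
  by (simp add: det_diagonal minkowski_def)

locale lorentzian_chart =
  fixes U :: "(real^4) set" and g :: "real^4 \<Rightarrow> real^4^4"
  assumes open_chart: "open U" and lorentzian: "lorentzian_metric_on U g"
begin

definition metric_at :: "real^4 \<Rightarrow> 4 \<Rightarrow> 4 \<Rightarrow> real" where
  "metric_at y a b = g y $ a $ b"

definition dmetric_at :: "real^4 \<Rightarrow> 4 \<Rightarrow> 4 \<Rightarrow> 4 \<Rightarrow> real" where
  "dmetric_at y c a b = pd (\<lambda>z. g z $ a $ b) c y"

definition ddmetric_at :: "real^4 \<Rightarrow> 4 \<Rightarrow> 4 \<Rightarrow> 4 \<Rightarrow> 4 \<Rightarrow> real" where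
  "ddmetric_at y d c a b = pd (\<lambda>z. pd (\<lambda>w. g w $ a $ b) c z) d y"

lemma metric_transpose: "y \<in> U \<Longrightarrow> transpose (g y) = g y"
  using lorentzian unfolding lorentzian_metric_on_def by blast

lemma metric_sym: "y \<in> U \<Longrightarrow> g y $ a $ b = g y $ b $ a"
  using arg_cong[where f="\<lambda>M. M $ b $ a", OF metric_transpose] by (simp add: transpose_def)

lemma det_metric: "y \<in> U \<Longrightarrow> det (g y) \<noteq> 0"
proof -
  assume "y \<in> U"
  then obtain P where P: "invertible P" "g y = transpose P ** minkowski ** P"
    using lorentzian unfolding lorentzian_metric_on_def by blast
  then show ?thesis using det_minkowski by (simp add: det_mul invertible_det_nz)
qed

lemma ginv_left: "y \<in> U \<Longrightarrow> (\<Sum>k\<in>UNIV. ginv g y a k * g y $ k $ b) = (if a = b then 1 else 0)"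
  using matrix_inv_works(1)[OF det_metric, of y] unfolding ginv_def
  by (simp add: vec_eq_iff matrix_matrix_mult_def mat_def)

lemma ginv_right: "y \<in> U \<Longrightarrow> (\<Sum>k\<in>UNIV. g y $ a $ k * ginv g y k b) = (if a = b then 1 else 0)"
  using matrix_inv_works(2)[OF det_metric, of y] unfolding ginv_def
  by (simp add: vec_eq_iff matrix_matrix_mult_def mat_def)

lemma ginv_sym: "y \<in> U \<Longrightarrow> ginv g y a b = ginv g y b a"
  unfolding ginv_def by (rule matrix_inv_transpose_sym[OF det_metric metric_transpose])

lemma metric_smooth: "iter_pd (\<lambda>z. g z $ a $ b) ds differentiable_on U"
  using lorentzian unfolding lorentzian_metric_on_def smooth_fun_on_def by blast

lemma metric_differentiable: "y \<in> U \<Longrightarrow> (\<lambda>z. g z $ a $ b) differentiable (at y)"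
  and dmetric_differentiable: "y \<in> U \<Longrightarrow> pd (\<lambda>z. g z $ a $ b) c differentiable (at y)"
  and ddmetric_differentiable: "y \<in> U \<Longrightarrow> pd (pd (\<lambda>z. g z $ a $ b) c) d differentiable (at y)"
  using metric_smooth[of a b "[]"] metric_smooth[of a b "[c]"] metric_smooth[of a b "[d, c]"]
  by (simp_all add: differentiable_on_eq_differentiable_at[OF open_chart])

lemma ddmetric_commute:
  assumes "y \<in> U"
  shows "pd (pd (\<lambda>z. g z $ a $ b) c) d y = pd (pd (\<lambda>z. g z $ a $ b) d) c y"
  using metric_smooth[of a b "[]"] metric_smooth[of a b "[c]"] metric_smooth[of a b "[d]"]
    metric_smooth[of a b "[d, c]"] metric_smooth[of a b "[c, d]"]
  by (intro pd_commute[OF open_chart assms]) simp_all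

lemma ginv_differentiable: "y \<in> U \<Longrightarrow> (\<lambda>z. ginv g z a b) differentiable (at y)"
  unfolding ginv_def
  by (rule differentiable_matrix_inv_entry[OF open_chart _ det_metric metric_differentiable])

lemma pd_ginv:
  assumes y: "y \<in> U"
  shows "pd (\<lambda>z. ginv g z a b) c y
    = - (\<Sum>p\<in>UNIV. \<Sum>q\<in>UNIV. ginv g y a p * pd (\<lambda>z. g z $ p $ q) c y * ginv g y q b)"
proof -
  \<comment> \<open>differentiate the identity \<open>g * ginv = 1\<close>\<close>
  have lowered: "(\<Sum>k\<in>UNIV. g y $ p $ k * pd (\<lambda>z. ginv g z k b) c y)
      = - (\<Sum>k\<in>UNIV. pd (\<lambda>z. g z $ p $ k) c y * ginv g y k b)" for p
  proof -
    have "pd (\<lambda>z. \<Sum>k\<in>UNIV. g z $ p $ k * ginv g z k b) c y = pd (\<lambda>z. if p = b then 1 else 0) c y"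
      by (rule pd_cong_open[OF open_chart y]) (simp add: ginv_right)
    moreover have "pd (\<lambda>z. \<Sum>k\<in>UNIV. g z $ p $ k * ginv g z k b) c y
       = (\<Sum>k\<in>UNIV. pd (\<lambda>z. g z $ p $ k) c y * ginv g y k b + g y $ p $ k * pd (\<lambda>z. ginv g z k b) c y)"
      using y by (simp add: pd_sum pd_mult metric_differentiable ginv_differentiable)
    ultimately show ?thesis by (simp add: sum.distrib eq_neg_iff_add_eq_0 add.commute)
  qed
  have "pd (\<lambda>z. ginv g z a b) c y
      = (\<Sum>k\<in>UNIV. (\<Sum>p\<in>UNIV. ginv g y a p * g y $ p $ k) * pd (\<lambda>z. ginv g z k b) c y)"
    using y by (simp add: ginv_left)
  also have "\<dots> = (\<Sum>k\<in>UNIV. \<Sum>p\<in>UNIV. ginv g y a p * (g y $ p $ k * pd (\<lambda>z. ginv g z k b) c y))"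
    by (simp add: sum_distrib_right mult.assoc)
  also have "\<dots> = (\<Sum>p\<in>UNIV. ginv g y a p * (\<Sum>k\<in>UNIV. g y $ p $ k * pd (\<lambda>z. ginv g z k b) c y))"
    by (subst sum.swap) (simp add: sum_distrib_left)
  also have "\<dots> = - (\<Sum>p\<in>UNIV. \<Sum>q\<in>UNIV. ginv g y a p * pd (\<lambda>z. g z $ p $ q) c y * ginv g y q b)"
    unfolding lowered by (simp add: sum_distrib_left sum_negf mult_ac)
  finally show ?thesis .
qed

lemma metric_jet_at: "y \<in> U \<Longrightarrow> metric_jet (metric_at y) (ginv g y) (dmetric_at y) (ddmetric_at y)"
proof
  assume y: "y \<in> U"
  have sym_near: "pd (\<lambda>w. g w $ a $ b) c z = pd (\<lambda>w. g w $ b $ a) c z" if "z \<in> U" for a b c z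
    by (rule pd_cong_open[OF open_chart that]) (simp add: metric_sym)
  show "metric_at y a b = metric_at y b a" for a b unfolding metric_at_def using metric_sym[OF y] .
  show "ginv g y a b = ginv g y b a" for a b using ginv_sym[OF y] .
  show "(\<Sum>k\<in>UNIV. ginv g y a k * metric_at y k b) = (if a = b then 1 else 0)" for a b
    unfolding metric_at_def using ginv_left[OF y] .
  show "(\<Sum>k\<in>UNIV. metric_at y a k * ginv g y k b) = (if a = b then 1 else 0)" for a b
    unfolding metric_at_def using ginv_right[OF y] .
  show "dmetric_at y c a b = dmetric_at y c b a" for c a b
    unfolding dmetric_at_def using sym_near[OF y] .
  show "ddmetric_at y d c a b = ddmetric_at y d c b a" for d c a b
    unfolding ddmetric_at_def by (rule pd_cong_open[OF open_chart y]) (simp add: sym_near)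
  show "ddmetric_at y d c a b = ddmetric_at y c d a b" for d c a b
    unfolding ddmetric_at_def using ddmetric_commute[OF y] by simp
qed

lemma christoffel_eq_jet: "christoffel g y a b c = christoffel_jet (ginv g y) (dmetric_at y) a b c"
  unfolding christoffel_def christoffel_jet_def christoffel_first_def dmetric_at_def
  by (simp add: sum_distrib_left)

lemma pd_christoffel_eq_jet:
  assumes y: "y \<in> U"
  shows "pd (\<lambda>z. christoffel g z a b c) l y
    = christoffel_deriv_jet (ginv g y) (dmetric_at y) (ddmetric_at y) l a b c"
proof -
  define \<Gamma> where "\<Gamma> d z = (pd (\<lambda>w. g w $ d $ b) c z + pd (\<lambda>w. g w $ d $ c) b z
    - pd (\<lambda>w. g w $ b $ c) d z) / 2" for d z
  have \<Gamma>_diff: "\<Gamma> d differentiable (at y)" for d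
    unfolding \<Gamma>_def using y by (intro differentiable_divide differentiable_add differentiable_diff
        dmetric_differentiable) auto
  have pd_\<Gamma>: "pd (\<Gamma> d) l y = christoffel_first_deriv (ddmetric_at y) l d b c" for d
    unfolding \<Gamma>_def christoffel_first_deriv_def ddmetric_at_def using y
    by (simp add: pd_divide_const pd_add pd_diff dmetric_differentiable)
  have "(\<lambda>z. christoffel g z a b c) = (\<lambda>z. \<Sum>d\<in>UNIV. ginv g z a d * \<Gamma> d z)"
    unfolding christoffel_def \<Gamma>_def by (simp add: sum_distrib_left)
  then have "pd (\<lambda>z. christoffel g z a b c) l y
      = (\<Sum>d\<in>UNIV. pd (\<lambda>z. ginv g z a d) l y * \<Gamma> d y + ginv g y a d * pd (\<Gamma> d) l y)"
    using y by (simp add: pd_sum pd_mult ginv_differentiable \<Gamma>_diff)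
  also have "\<dots> = christoffel_deriv_jet (ginv g y) (dmetric_at y) (ddmetric_at y) l a b c"
    unfolding christoffel_deriv_jet_def pd_\<Gamma> pd_ginv[OF y] ginv_deriv_jet_def
    by (simp add: \<Gamma>_def christoffel_first_def dmetric_at_def)
  finally show ?thesis .
qed

lemma riem_eq_jet:
  assumes y: "y \<in> U"
  shows "riem g y j k l m = riem_jet (ginv g y) (dmetric_at y) (ddmetric_at y) j k l m"
proof -
  interpret metric_jet "metric_at y" "ginv g y" "dmetric_at y" "ddmetric_at y"
    by (rule metric_jet_at[OF y])
  have "riem_up g y e k l m = riem_up_jet (ginv g y) (dmetric_at y) (ddmetric_at y) e k l m" for e
    unfolding riem_up_def riem_up_jet_def pd_christoffel_eq_jet[OF y] unfolding christoffel_eq_jet ..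
  then show ?thesis unfolding riem_def metric_at_def[symmetric] by (simp add: lower_riem_up_jet)
qed

lemma weyl_eq_jet:
  "y \<in> U \<Longrightarrow> weyl g y = weyl_jet (metric_at y) (ginv g y) (dmetric_at y) (ddmetric_at y)"
  unfolding weyl_def weyl_jet_def scal_def scal_jet_def ricci_def ricci_jet_def
  by (simp add: fun_eq_iff riem_eq_jet metric_at_def)

lemma weyl_algebraic_curvature: "y \<in> U \<Longrightarrow> algebraic_curvature (weyl g y)"
  and weyl_trace_free: "y \<in> U \<Longrightarrow> trace_free (ginv g y) (weyl g y)"
  by (simp_all add: weyl_eq_jet metric_jet.weyl_jet_algebraic_curvature metric_jet.weyl_jet_trace_free
      metric_jet_at)

lemma weyl_differentiable:
  assumes y: "y \<in> U"
  shows "(\<lambda>z. weyl g z j k l m) differentiable (at y)"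
proof -
  have "(\<lambda>z. weyl_jet (metric_at z) (ginv g z) (dmetric_at z) (ddmetric_at z) j k l m) differentiable (at y)"
    unfolding weyl_jet_def ricci_jet_def scal_jet_def riem_jet_def christoffel_first_deriv_def
      christoffel_first_def metric_at_def dmetric_at_def ddmetric_at_def
    by (intro derivative_intros ballI metric_differentiable[OF y] ginv_differentiable[OF y]
        dmetric_differentiable[OF y] ddmetric_differentiable[OF y]) auto
  then show ?thesis by (rule differentiable_cong_open[OF open_chart y, rotated]) (simp add: weyl_eq_jet)
qed

lemma trace_cov_weyl:
  assumes x: "x \<in> U"
  shows "(\<Sum>j\<in>UNIV. \<Sum>m\<in>UNIV. ginv g x j m * cov_weyl g x i j k l m) = 0"
proof -
  interpret metric_jet "metric_at x" "ginv g x" "dmetric_at x" "ddmetric_at x"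
    by (rule metric_jet_at[OF x])
  \<comment> \<open>the trace vanishes identically on U, hence so does its partial derivative\<close>
  have "pd (\<lambda>y. \<Sum>j\<in>UNIV. \<Sum>m\<in>UNIV. ginv g y j m * weyl g y j k l m) i x = pd (\<lambda>y. 0) i x"
    by (rule pd_cong_open[OF open_chart x]) (use weyl_trace_free in \<open>simp add: trace_free_def\<close>)
  moreover have "pd (\<lambda>y. \<Sum>j\<in>UNIV. \<Sum>m\<in>UNIV. ginv g y j m * weyl g y j k l m) i x
    = (\<Sum>j\<in>UNIV. \<Sum>m\<in>UNIV. pd (\<lambda>y. ginv g y j m) i x * weyl g x j k l m
        + ginv g x j m * pd (\<lambda>y. weyl g y j k l m) i x)"
    using x by (simp add: pd_sum pd_mult ginv_differentiable weyl_differentiable)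
  ultimately have "(\<Sum>j\<in>UNIV. \<Sum>m\<in>UNIV. dH i j m * weyl g x j k l m
      + ginv g x j m * pd (\<lambda>y. weyl g y j k l m) i x) = 0"
    by (simp add: pd_ginv[OF x] ginv_deriv_jet_def dmetric_at_def)
  from trace_free_cov_deriv_jet[where dT="\<lambda>j k l m. pd (\<lambda>y. weyl g y j k l m) i x" and k=k and l=l,
      OF weyl_trace_free[OF x] this]
  show ?thesis unfolding cov_weyl_def christoffel_eq_jet .
qed

lemma weyl_annihilates_recurrence_vector:
  assumes x: "x \<in> U"
    and rec: "\<And>i j k l m. cov_weyl g x i j k l m = 2 * a $ i * weyl g x j k l m + a $ j * weyl g x i k l m
        + a $ k * weyl g x j i l m + a $ l * weyl g x j k i m + a $ m * weyl g x j k l i"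
  shows "(\<Sum>m\<in>UNIV. weyl g x j k l m * raise g x a m) = 0"
proof -
  have "(\<Sum>j\<in>UNIV. \<Sum>m\<in>UNIV. ginv g x j m * (2 * a $ i * weyl g x j k l m + a $ j * weyl g x i k l m
      + a $ k * weyl g x j i l m + a $ l * weyl g x j k i m + a $ m * weyl g x j k l i)) = 0" for i k l
    using trace_cov_weyl[OF x, of i k l] unfolding rec .
  from annihilates_of_traced_recurrence[where A="\<lambda>i. a $ i",
      OF weyl_algebraic_curvature[OF x] weyl_trace_free[OF x] ginv_sym[OF x] this]
  show ?thesis unfolding raise_def .
qed

lemma annihilating_covector_null:
  assumes x: "x \<in> U" and weyl: "\<exists>j k l m. weyl g x j k l m \<noteq> 0"
    and ann: "\<And>j k l. (\<Sum>m\<in>UNIV. weyl g x j k l m * raise g x a m) = 0"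
  shows "(\<Sum>i\<in>UNIV. \<Sum>j\<in>UNIV. ginv g x i j * a $ i * a $ j) = 0"
proof (rule ccontr)
  interpret jet: metric_jet "metric_at x" "ginv g x" "dmetric_at x" "ddmetric_at x"
    by (rule metric_jet_at[OF x])
  assume nonnull: "(\<Sum>i\<in>UNIV. \<Sum>j\<in>UNIV. ginv g x i j * a $ i * a $ j) \<noteq> 0"
  define b where "b = (\<chi> m. raise g x a m)"
  have lower: "(\<Sum>j\<in>UNIV. g x $ i $ j * b $ j) = a $ i" for i
  proof -
    have "(\<Sum>j\<in>UNIV. g x $ i $ j * b $ j) = (\<Sum>j\<in>UNIV. \<Sum>p\<in>UNIV. g x $ i $ j * (ginv g x j p * a $ p))"
      by (simp add: b_def raise_def sum_distrib_left)
    also have "\<dots> = (\<Sum>p\<in>UNIV. (\<Sum>j\<in>UNIV. g x $ i $ j * ginv g x j p) * a $ p)"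
      by (subst sum.swap) (simp add: sum_distrib_left sum_distrib_right mult_ac)
    finally show ?thesis using x by (simp add: ginv_right)
  qed
  have "metric_form (metric_at x) b b = (\<Sum>i\<in>UNIV. b $ i * (\<Sum>j\<in>UNIV. g x $ i $ j * b $ j))"
    unfolding metric_form_def metric_at_def by (simp add: sum_distrib_left mult_ac)
  also have "\<dots> = (\<Sum>i\<in>UNIV. \<Sum>j\<in>UNIV. ginv g x i j * a $ i * a $ j)"
    unfolding lower unfolding b_def raise_def by (simp add: sum_distrib_right sum_distrib_left mult_ac)
  finally have "metric_form (metric_at x) b b \<noteq> 0" using nonnull by simp
  moreover have "(\<Sum>m\<in>UNIV. weyl g x j k l m * b $ m) = 0" for j k l
    using ann by (simp add: b_def)
  ultimately have "weyl g x j k l m = 0" for j k l m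
    by (rule trace_free_curvature_annihilated_by_nonnull[OF jet.metric_sym jet.inverse_left
          jet.inverse_right weyl_algebraic_curvature[OF x] weyl_trace_free[OF x], rotated])
  then show False using weyl by blast
qed

end

theorem mainTheorem14:
  fixes U :: "(real^4) set" and g :: "real^4 \<Rightarrow> real^4^4" and A :: "real^4 \<Rightarrow> real^4"
    and x :: "real^4"
  assumes "open U" and "connected U"
    and "lorentzian_metric_on U g"
    and "\<forall>i. smooth_fun_on U (\<lambda>y. A y $ i)"
    and "CQR4 U g A"
    and "x \<in> U"
    and "\<exists>j k l m. weyl g x j k l m \<noteq> 0"
  shows "(\<Sum>i\<in>UNIV. \<Sum>j\<in>UNIV. ginv g x i j * A x $ i * A x $ j) = 0
         \<and> (\<forall>j k l. (\<Sum>m\<in>UNIV. weyl g x j k l m * raise g x (A x) m) = 0)"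
proof -
  interpret lorentzian_chart U g using assms(1,3) by unfold_locales
  have "cov_weyl g x i j k l m = 2 * A x $ i * weyl g x j k l m + A x $ j * weyl g x i k l m
      + A x $ k * weyl g x j i l m + A x $ l * weyl g x j k i m + A x $ m * weyl g x j k l i" for i j k l m
    using assms(5,6) unfolding CQR4_def by blast
  then have annihilated: "(\<Sum>m\<in>UNIV. weyl g x j k l m * raise g x (A x) m) = 0" for j k l
    by (rule weyl_annihilates_recurrence_vector[OF assms(6)])
  then have "(\<Sum>i\<in>UNIV. \<Sum>j\<in>UNIV. ginv g x i j * A x $ i * A x $ j) = 0"
    by (rule annihilating_covector_null[OF assms(6,7)])
  with annihilated show ?thesis by blast
qed

end
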